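(* Assume $n_2\le n_1$. There is an absolute positive constant $c$ such that for any $\epsilon\le\sqrt{n_1n_2}$, \[ \log N(\epsilon,\mathbb{C}_{\mathsf{Perm}}^{\mathsf{r},\mathsf{c}},\|\cdot\|_F)\le2n_1\log n_1+\Big[c\frac{n_1n_2}{\epsilon^2}\Big(\log\frac{\sqrt{n_1n_2}}{\epsilon}\Big)^2\Big]\wedge\Big(c\,n_1n_2\log\frac{\sqrt{n_1n_2}}{\epsilon}\Big)\wedge\Big(c\frac{\sqrt{n_1n_2}}{\epsilon}n_2\log n_1\Big), \] \[ \log N(\epsilon,\mathbb{C}_{\mathsf{BISO}},\|\cdot\|_F)\le\Big[c\frac{n_1n_2}{\epsilon^2}\Big(\log\frac{\sqrt{n_1n_2}}{\epsilon}\Big)^2\Big]\wedge\Big(c\,n_1n_2\log\frac{\sqrt{n_1n_2}}{\epsilon}\Big)\wedge\Big(c\frac{\sqrt{n_1n_2}}{\epsilon}n_2\log n_1\Big), \] and these metric entropies are zero if $\epsilon>\sqrt{n_1n_2}$. Also, for each $\epsilon\le1$, \[ \log N(\epsilon,\mathbb{C}_{\mathsf{Perm}}^{\mathsf{r},\mathsf{c}},\|\cdot\|_\infty)\le\Big[\frac{n_2}{\epsilon}\log(en_1)\Big]\wedge\Big(n_1n_2\log\frac e\epsilon\Big)+2n_1\log n_1,\qquad \log N(\epsilon,\mathbb{C}_{\mathsf{BISO}},\|\cdot\|_\infty)\le\Big[\frac{n_2}{\epsilon}\log(en_1)\Big]\wedge\Big(n_1n_2\log\frac e\epsilon\Big),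 \] and these metric entropies are zero if $\epsilon>1$.
   Context: $\mathbb{C}_{\mathsf{BISO}}$ is the set of matrices in $[0,1]^{n_1\times n_2}$ with all rows and columns non-decreasing; for permutations $\pi$ of $[n_1]$ and $\sigma$ of $[n_2]$, $[M(\pi,\sigma)]_{i,j}=M_{\pi(i),\sigma(j)}$; $\mathbb{C}_{\mathsf{Perm}}^{\mathsf{r},\mathsf{c}}=\bigcup_{\pi,\sigma}\{M(\pi,\sigma):M\in\mathbb{C}_{\mathsf{BISO}}\}$. For a set $\mathcal C$ with a norm $\|\cdot\|$, $N(\epsilon,\mathcal C,\|\cdot\|)$ is the $\epsilon$-covering number of $\mathcal C$ in $\|\cdot\|$ and $\log N$ its metric entropy. $\|A\|_\infty=\max_{i,j}|A_{i,j}|$; $a\wedge b=\min\{a,b\}$; logarithms natural. *)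

theory Defs
  imports "HOL-Analysis.Analysis" "HOL-Combinatorics.Permutations"
begin

text \<open>An n1 x n2 real matrix is represented as a function nat => nat => real whose
  relevant entries are those with row index < n1 and column index < n2 (0-based);
  matrices in the sets below are extensional (zero outside the index range).\<close>

definition BISO :: "nat \<Rightarrow> nat \<Rightarrow> (nat \<Rightarrow> nat \<Rightarrow> real) set" where
  "BISO n1 n2 = {M.
     (\<forall>i j. i < n1 \<and> j < n2 \<longrightarrow> 0 \<le> M i j \<and> M i j \<le> 1)
   \<and> (\<forall>i j j'. i < n1 \<and> j \<le> j' \<and> j' < n2 \<longrightarrow> M i j \<le> M i j')
   \<and> (\<forall>i i' j. i \<le> i' \<and> i' < n1 \<and> j < n2 \<longrightarrow> M i j \<le> M i' j)
   \<and> (\<forall>i j. \<not> (i < n1 \<and> j < n2) \<longrightarrow> M i j = 0)}"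

definition perm_mat :: "(nat \<Rightarrow> nat \<Rightarrow> real) \<Rightarrow> (nat \<Rightarrow> nat) \<Rightarrow> (nat \<Rightarrow> nat)
    \<Rightarrow> (nat \<Rightarrow> nat \<Rightarrow> real)" where
  "perm_mat M \<pi> \<sigma> = (\<lambda>i j. M (\<pi> i) (\<sigma> j))"

definition Perm_rc :: "nat \<Rightarrow> nat \<Rightarrow> (nat \<Rightarrow> nat \<Rightarrow> real) set" where
  "Perm_rc n1 n2 = (\<Union>\<pi> \<in> {\<pi>. \<pi> permutes {..<n1}}. \<Union>\<sigma> \<in> {\<sigma>. \<sigma> permutes {..<n2}}.
      (\<lambda>M. perm_mat M \<pi> \<sigma>) ` BISO n1 n2)"

definition frob_dist :: "nat \<Rightarrow> nat \<Rightarrow> (nat \<Rightarrow> nat \<Rightarrow> real) \<Rightarrow> (nat \<Rightarrow> nat \<Rightarrow> real) \<Rightarrow> real" where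
  "frob_dist n1 n2 A B = sqrt (\<Sum>i<n1. \<Sum>j<n2. (A i j - B i j)\<^sup>2)"

definition sup_dist :: "nat \<Rightarrow> nat \<Rightarrow> (nat \<Rightarrow> nat \<Rightarrow> real) \<Rightarrow> (nat \<Rightarrow> nat \<Rightarrow> real) \<Rightarrow> real" where
  "sup_dist n1 n2 A B = (MAX (i, j) \<in> {..<n1} \<times> {..<n2}. \<bar>A i j - B i j\<bar>)"

definition covering_number :: "real \<Rightarrow> 'a set \<Rightarrow> ('a \<Rightarrow> 'a \<Rightarrow> real) \<Rightarrow> nat" where
  "covering_number eps C d =
     (LEAST k. \<exists>T. finite T \<and> T \<subseteq> C \<and> card T = k \<and> (\<forall>x\<in>C. \<exists>t\<in>T. d x t \<le> eps))"

end

theory Submission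
  imports Defs
begin

text \<open>
  Up to permutations of rows and columns, which cost a factor \<open>n1! n2!\<close>, it suffices to cover the
  bi-isotonic matrices. In the sup-norm they are pinned down to within \<open>e\<close> either by quantizing
  every entry to a grid of mesh \<open>e\<close>, or, since columns are monotone, by recording for every
  grid level and every column how many entries lie below that level; the Frobenius bounds with a
  single logarithm follow by taking \<open>e = eps / sqrt (n1 * n2)\<close>. For the bound
  \<open>n1 n2 / eps\<^sup>2 * log\<^sup>2\<close>, the columns are stretched to turn the matrix into a bi-isotonic
  square of side \<open>2^K\<close>, which is coded at the dyadic levels \<open>l \<le> m\<close>: a block of level \<open>l\<close> is
  split when its oscillation exceeds \<open>2^(l - m)\<close>. By monotonicity the oscillations at one level
  sum to at most \<open>2 * 2^l\<close>, so only \<open>O(2^m)\<close> blocks are split per level, and recording them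
  together with the quantized corner values of their children costs \<open>O(2^m)\<close> bits per level.
  For large \<open>eps\<close> the constant matrix \<open>1/2\<close> alone is a cover.
\<close>

section \<open>Covering numbers\<close>

definition covers :: "real \<Rightarrow> 'a set \<Rightarrow> ('a \<Rightarrow> 'a \<Rightarrow> real) \<Rightarrow> 'a set \<Rightarrow> bool" where
  "covers eps C d T \<longleftrightarrow> finite T \<and> T \<subseteq> C \<and> (\<forall>x\<in>C. \<exists>t\<in>T. d x t \<le> eps)"

lemma covering_number_le_card: "covers eps C d T \<Longrightarrow> covering_number eps C d \<le> card T"
  unfolding covering_number_def covers_def by (rule Least_le) blast

lemma covering_number_attained:
  assumes "covers eps C d T"
  obtains T' where "covers eps C d T'" "card T' = covering_number eps C d"
proof -
  have "\<exists>T'. finite T' \<and> T' \<subseteq> C \<and> card T' = covering_number eps C d \<and> (\<forall>x\<in>C. \<exists>t\<in>T'. d x t \<le> eps)"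
    unfolding covering_number_def
    by (rule LeastI[of _ "card T"]) (use assms in \<open>auto simp: covers_def\<close>)
  with that show ?thesis unfolding covers_def by blast
qed

lemma covering_number_pos:
  assumes "covers eps C d T" "C \<noteq> {}"
  shows "0 < covering_number eps C d"
proof -
  obtain T' where T': "covers eps C d T'" "card T' = covering_number eps C d"
    using covering_number_attained[OF assms(1)] .
  then have "T' \<noteq> {}" "finite T'"
    using assms(2) unfolding covers_def by auto
  with T'(2) show ?thesis by auto
qed

lemma covers_of_code:
  assumes "finite S" "E ` C \<subseteq> S" "\<And>x y. x \<in> C \<Longrightarrow> y \<in> C \<Longrightarrow> E x = E y \<Longrightarrow> d x y \<le> eps"
  shows "covers eps C d (inv_into C E ` E ` C)" "card (inv_into C E ` E ` C) \<le> card S"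
proof -
  have fin: "finite (E ` C)"
    using assms(1,2) finite_subset by blast
  have "d x (inv_into C E (E x)) \<le> eps" if "x \<in> C" for x
    using that by (intro assms(3)) (auto simp: inv_into_into f_inv_into_f)
  then show "covers eps C d (inv_into C E ` E ` C)"
    using fin by (auto simp: covers_def inv_into_into)
  have "card (inv_into C E ` E ` C) \<le> card (E ` C)"
    by (rule card_image_le[OF fin])
  also have "\<dots> \<le> card S"
    by (rule card_mono[OF assms(1,2)])
  finally show "card (inv_into C E ` E ` C) \<le> card S" .
qed

lemma ln_covering_number_le_code:
  assumes "finite S" "E ` C \<subseteq> S" "\<And>x y. x \<in> C \<Longrightarrow> y \<in> C \<Longrightarrow> E x = E y \<Longrightarrow> d x y \<le> eps"
    and "C \<noteq> {}"
  shows "ln (real (covering_number eps C d)) \<le> ln (real (card S))"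
proof -
  obtain T where T: "covers eps C d T" "card T \<le> card S"
    using covers_of_code[OF assms(1,2)] assms(3) by blast
  have "covering_number eps C d \<le> card S"
    using covering_number_le_card[OF T(1)] T(2) by linarith
  with covering_number_pos[OF T(1) assms(4)] show ?thesis
    by simp
qed

lemma ln_covering_number_eq_0:
  assumes "t \<in> C" "\<And>x. x \<in> C \<Longrightarrow> d x t \<le> eps"
  shows "ln (real (covering_number eps C d)) = 0"
proof -
  have cov: "covers eps C d {t}"
    using assms unfolding covers_def by blast
  have "covering_number eps C d = 1"
    using covering_number_le_card[OF cov] covering_number_pos[OF cov] assms(1) by fastforce
  then show ?thesis by simp
qed

section \<open>Bi-isotonic matrices and their permutations\<close>

lemma
  assumes "M \<in> BISO n1 n2"
  shows BISO_bounds: "\<And>i j. i < n1 \<Longrightarrow> j < n2 \<Longrightarrow> 0 \<le> M i j \<and> M i j \<le> 1"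
    and BISO_mono_row_index: "\<And>i i' j. i \<le> i' \<Longrightarrow> i' < n1 \<Longrightarrow> j < n2 \<Longrightarrow> M i j \<le> M i' j"
    and BISO_mono_col_index: "\<And>i j j'. i < n1 \<Longrightarrow> j \<le> j' \<Longrightarrow> j' < n2 \<Longrightarrow> M i j \<le> M i j'"
  using assms unfolding BISO_def by blast+

lemma BISO_subset_Perm_rc: "BISO n1 n2 \<subseteq> Perm_rc n1 n2"
proof
  fix M assume "M \<in> BISO n1 n2"
  then have "perm_mat M id id \<in> Perm_rc n1 n2"
    unfolding Perm_rc_def by (blast intro: permutes_id)
  then show "M \<in> Perm_rc n1 n2"
    by (simp add: perm_mat_def)
qed

lemma Perm_rc_bounds:
  assumes "A \<in> Perm_rc n1 n2" "i < n1" "j < n2"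
  shows "0 \<le> A i j \<and> A i j \<le> 1"
proof -
  obtain p s M where p: "p permutes {..<n1}" and s: "s permutes {..<n2}"
    and M: "M \<in> BISO n1 n2" and A: "A = perm_mat M p s"
    using assms(1) unfolding Perm_rc_def by auto
  have "p i < n1" "s j < n2"
    using assms(2,3) permutes_in_image[OF p, of i] permutes_in_image[OF s, of j] by auto
  then show ?thesis
    unfolding A perm_mat_def by (rule BISO_bounds[OF M])
qed

lemma frob_dist_le_entrywise:
  assumes "\<And>i j. i < n1 \<Longrightarrow> j < n2 \<Longrightarrow> \<bar>A i j - B i j\<bar> \<le> e"
  shows "frob_dist n1 n2 A B \<le> sqrt (real n1 * real n2) * e"
proof -
  have "(\<Sum>i<n1. \<Sum>j<n2. (A i j - B i j)\<^sup>2) \<le> (\<Sum>i<n1. \<Sum>j<n2. e\<^sup>2)"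
  proof (intro sum_mono)
    fix i j assume "i \<in> {..<n1}" "j \<in> {..<n2}"
    then have "\<bar>A i j - B i j\<bar>\<^sup>2 \<le> e\<^sup>2"
      using assms by (intro power_mono) auto
    then show "(A i j - B i j)\<^sup>2 \<le> e\<^sup>2" by simp
  qed
  then have "frob_dist n1 n2 A B \<le> sqrt (real n1 * real n2 * e\<^sup>2)"
    unfolding frob_dist_def by simp
  also have "\<dots> = sqrt (real n1 * real n2) * e"
    using assms[of 0 0] by (cases "n1 = 0 \<or> n2 = 0") (auto simp: real_sqrt_mult)
  finally show ?thesis .
qed

lemma sup_dist_le_entrywise:
  assumes "\<And>i j. i < n1 \<Longrightarrow> j < n2 \<Longrightarrow> \<bar>A i j - B i j\<bar> \<le> e" "1 \<le> n1" "1 \<le> n2"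
  shows "sup_dist n1 n2 A B \<le> e"
  unfolding sup_dist_def using assms by (subst Max_le_iff) (auto simp: lessThan_empty_iff)

definition half_matrix :: "nat \<Rightarrow> nat \<Rightarrow> nat \<Rightarrow> nat \<Rightarrow> real" where
  "half_matrix n1 n2 = (\<lambda>i j. if i < n1 \<and> j < n2 then 1/2 else 0)"

lemma half_matrix_in_BISO: "half_matrix n1 n2 \<in> BISO n1 n2"
  unfolding BISO_def half_matrix_def by auto

lemma half_matrix_in_Perm_rc: "half_matrix n1 n2 \<in> Perm_rc n1 n2"
  using half_matrix_in_BISO BISO_subset_Perm_rc by blast

lemma ln_covering_number_eq_0_large_eps:
  assumes "half_matrix n1 n2 \<in> C" "C \<subseteq> Perm_rc n1 n2" "1 \<le> n1" "1 \<le> n2"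
  shows "sqrt (real n1 * real n2) / 2 \<le> eps \<Longrightarrow> ln (real (covering_number eps C (frob_dist n1 n2))) = 0"
    and "1 / 2 \<le> eps \<Longrightarrow> ln (real (covering_number eps C (sup_dist n1 n2))) = 0"
proof -
  have close: "\<bar>A i j - half_matrix n1 n2 i j\<bar> \<le> 1/2" if "A \<in> C" "i < n1" "j < n2" for A i j
  proof -
    have "0 \<le> A i j \<and> A i j \<le> 1"
      using Perm_rc_bounds[of A n1 n2 i j] that assms(2) by blast
    with that show ?thesis
      unfolding half_matrix_def abs_le_iff by auto
  qed
  show "ln (real (covering_number eps C (frob_dist n1 n2))) = 0"
    if "sqrt (real n1 * real n2) / 2 \<le> eps"
  proof (rule ln_covering_number_eq_0[OF assms(1)])
    fix A assume "A \<in> C"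
    then have "frob_dist n1 n2 A (half_matrix n1 n2) \<le> sqrt (real n1 * real n2) * (1/2)"
      by (intro frob_dist_le_entrywise close)
    with that show "frob_dist n1 n2 A (half_matrix n1 n2) \<le> eps" by simp
  qed
  show "ln (real (covering_number eps C (sup_dist n1 n2))) = 0" if "1 / 2 \<le> eps"
  proof (rule ln_covering_number_eq_0[OF assms(1)])
    fix A assume "A \<in> C"
    then have "sup_dist n1 n2 A (half_matrix n1 n2) \<le> 1/2"
      using assms(3,4) by (intro sup_dist_le_entrywise close)
    with that show "sup_dist n1 n2 A (half_matrix n1 n2) \<le> eps" by simp
  qed
qed

lemma frob_dist_perm_mat:
  assumes p: "p permutes {..<n1}" and s: "s permutes {..<n2}"
  shows "frob_dist n1 n2 (perm_mat A p s) (perm_mat B p s) = frob_dist n1 n2 A B"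
proof -
  have "(\<Sum>i<n1. \<Sum>j<n2. (A (p i) (s j) - B (p i) (s j))\<^sup>2) = (\<Sum>i<n1. \<Sum>j<n2. (A (p i) j - B (p i) j)\<^sup>2)"
    by (rule sum.cong[OF refl]) (rule sum.permute[OF s, symmetric, unfolded comp_def])
  also have "\<dots> = (\<Sum>i<n1. \<Sum>j<n2. (A i j - B i j)\<^sup>2)"
    by (rule sum.permute[OF p, symmetric, unfolded comp_def])
  finally show ?thesis unfolding frob_dist_def perm_mat_def by simp
qed

lemma sup_dist_perm_mat:
  assumes p: "p permutes {..<n1}" and s: "s permutes {..<n2}"
  shows "sup_dist n1 n2 (perm_mat A p s) (perm_mat B p s) = sup_dist n1 n2 A B"
proof -
  let ?X = "{..<n1} \<times> {..<n2}"
  have "(\<lambda>(i, j). \<bar>A (p i) (s j) - B (p i) (s j)\<bar>) ` ?X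
      = (\<lambda>(i, j). \<bar>A i j - B i j\<bar>) ` (\<lambda>(i, j). (p i, s j)) ` ?X"
    by (simp add: image_image case_prod_unfold)
  also have "(\<lambda>(i, j). (p i, s j)) ` ?X = ?X"
    unfolding image_paired_Times permutes_image[OF p] permutes_image[OF s] ..
  finally show ?thesis
    unfolding sup_dist_def perm_mat_def by simp
qed

lemma covers_Perm_rc:
  fixes T :: "(nat \<Rightarrow> nat \<Rightarrow> real) set"
  assumes T: "covers eps (BISO n1 n2) d T"
    and inv: "\<And>p s A B. p permutes {..<n1} \<Longrightarrow> s permutes {..<n2} \<Longrightarrow>
      d (perm_mat A p s) (perm_mat B p s) = d A B"
  defines "T' \<equiv> (\<lambda>(p, s, M). perm_mat M p s) ` ({p. p permutes {..<n1}} \<times> {s. s permutes {..<n2}} \<times> T)"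
  shows "covers eps (Perm_rc n1 n2) d T'" "card T' \<le> fact n1 * fact n2 * card T"
proof -
  have fin: "finite ({p. p permutes {..<n1}} \<times> {s. s permutes {..<n2}} \<times> T)"
    using T finite_permutations unfolding covers_def by blast
  have "card T' \<le> card ({p. p permutes {..<n1}} \<times> {s. s permutes {..<n2}} \<times> T)"
    unfolding T'_def by (rule card_image_le[OF fin])
  then show "card T' \<le> fact n1 * fact n2 * card T"
    by (simp add: card_cartesian_product card_permutations)
  have "\<exists>t\<in>T'. d A t \<le> eps" if A: "A \<in> Perm_rc n1 n2" for A
  proof -
    obtain p s M where ps: "p permutes {..<n1}" "s permutes {..<n2}"
      and "M \<in> BISO n1 n2" and A: "A = perm_mat M p s"
      using A unfolding Perm_rc_def by auto
    then obtain t where "t \<in> T" "d M t \<le> eps"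
      using T unfolding covers_def by blast
    then show ?thesis
      using ps inv[OF ps] unfolding A T'_def by force
  qed
  moreover have "T' \<subseteq> Perm_rc n1 n2"
    using T unfolding T'_def covers_def Perm_rc_def by auto
  ultimately show "covers eps (Perm_rc n1 n2) d T'"
    using fin unfolding covers_def T'_def by blast
qed

lemma ln_fact_le: "ln (fact n :: real) \<le> real n * ln (real n)"
proof (cases "n = 0")
  case False
  have "(fact n :: real) \<le> real n ^ n"
    using fact_le_power[of n] by simp
  with False show ?thesis
    by (simp add: ln_realpow flip: ln_le_cancel_iff)
qed simp

lemma ln_covering_number_Perm_rc_le:
  assumes T: "covers eps (BISO n1 n2) d T" and "n2 \<le> n1"
    and inv: "\<And>p s A B. p permutes {..<n1} \<Longrightarrow> s permutes {..<n2} \<Longrightarrow>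
      d (perm_mat A p s) (perm_mat B p s) = d A B"
  shows "ln (real (covering_number eps (Perm_rc n1 n2) d))
      \<le> 2 * real n1 * ln (real n1) + ln (real (covering_number eps (BISO n1 n2) d))"
proof -
  obtain T0 where T0: "covers eps (BISO n1 n2) d T0" "card T0 = covering_number eps (BISO n1 n2) d"
    using covering_number_attained[OF T] .
  note T' = covers_Perm_rc[of eps n1 n2 d T0, OF T0(1) inv]
  have pos: "0 < covering_number eps (Perm_rc n1 n2) d" "0 < covering_number eps (BISO n1 n2) d"
    using covering_number_pos[OF T'(1)] covering_number_pos[OF T0(1)]
      half_matrix_in_BISO BISO_subset_Perm_rc by blast+
  have "covering_number eps (Perm_rc n1 n2) d \<le> fact n1 * fact n2 * covering_number eps (BISO n1 n2) d"
    using covering_number_le_card[OF T'(1)] T'(2) T0(2) by simp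
  then have "real (covering_number eps (Perm_rc n1 n2) d)
      \<le> real (fact n1 * fact n2 * covering_number eps (BISO n1 n2) d)"
    by (rule of_nat_mono)
  then have "real (covering_number eps (Perm_rc n1 n2) d)
      \<le> fact n1 * fact n2 * real (covering_number eps (BISO n1 n2) d)"
    by simp
  then have "ln (real (covering_number eps (Perm_rc n1 n2) d))
      \<le> ln (fact n1) + ln (fact n2) + ln (real (covering_number eps (BISO n1 n2) d))"
    using pos by (simp add: ln_mult flip: ln_le_cancel_iff)
  moreover have "real n2 * ln (real n2) \<le> real n1 * ln (real n1)"
  proof (cases "n2 = 0")
    case True
    then show ?thesis by (cases "n1 = 0") auto
  next
    case False
    with \<open>n2 \<le> n1\<close> show ?thesis by (intro mult_mono) auto
  qed
  then have "ln (fact n2 :: real) \<le> real n1 * ln (real n1)"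
    using ln_fact_le[of n2] by linarith
  ultimately show ?thesis
    using ln_fact_le[of n1] by linarith
qed

section \<open>Dyadic blocks of bi-isotonic squares\<close>

definition biso_square :: "nat \<Rightarrow> (nat \<Rightarrow> nat \<Rightarrow> real) \<Rightarrow> bool" where
  "biso_square P M \<longleftrightarrow> (\<forall>i j. i < P \<and> j < P \<longrightarrow> 0 \<le> M i j \<and> M i j \<le> 1) \<and>
     (\<forall>i i' j j'. i \<le> i' \<and> j \<le> j' \<and> i' < P \<and> j' < P \<longrightarrow> M i j \<le> M i' j')"

lemma biso_squareD:
  assumes "biso_square P M"
  shows "\<And>i j. i < P \<Longrightarrow> j < P \<Longrightarrow> 0 \<le> M i j"
    and "\<And>i j. i < P \<Longrightarrow> j < P \<Longrightarrow> M i j \<le> 1"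
    and "\<And>i i' j j'. i \<le> i' \<Longrightarrow> j \<le> j' \<Longrightarrow> i' < P \<Longrightarrow> j' < P \<Longrightarrow> M i j \<le> M i' j'"
  using assms unfolding biso_square_def by blast+

text \<open>At level \<open>l \<le> K\<close> the square \<open>{..<2^K} \<times> {..<2^K}\<close> is cut into \<open>2^l \<times> 2^l\<close> blocks of
  side \<open>h = 2^(K - l)\<close>: block \<open>b\<close> occupies the rows \<open>[fst b * h, (fst b + 1) * h)\<close> and the
  columns \<open>[snd b * h, (snd b + 1) * h)\<close>. By monotonicity its entries lie between the values at its
  two extreme corners.\<close>

definition block_side :: "nat \<Rightarrow> nat \<Rightarrow> nat" where
  "block_side K l = 2 ^ (K - l)"

definition block_lo :: "nat \<Rightarrow> (nat \<Rightarrow> nat \<Rightarrow> real) \<Rightarrow> nat \<Rightarrow> nat \<times> nat \<Rightarrow> real" where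
  "block_lo K M l b = M (fst b * block_side K l) (snd b * block_side K l)"

definition block_hi :: "nat \<Rightarrow> (nat \<Rightarrow> nat \<Rightarrow> real) \<Rightarrow> nat \<Rightarrow> nat \<times> nat \<Rightarrow> real" where
  "block_hi K M l b = M ((fst b + 1) * block_side K l - 1) ((snd b + 1) * block_side K l - 1)"

definition block_osc :: "nat \<Rightarrow> (nat \<Rightarrow> nat \<Rightarrow> real) \<Rightarrow> nat \<Rightarrow> nat \<times> nat \<Rightarrow> real" where
  "block_osc K M l b = block_hi K M l b - block_lo K M l b"

definition block_of :: "nat \<Rightarrow> nat \<Rightarrow> nat \<Rightarrow> nat \<Rightarrow> nat \<times> nat" where
  "block_of K l i j = (i div block_side K l, j div block_side K l)"

definition parent_block :: "nat \<times> nat \<Rightarrow> nat \<times> nat" where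
  "parent_block b = (fst b div 2, snd b div 2)"

lemma block_side_pos: "0 < block_side K l"
  by (simp add: block_side_def)

lemma block_side_Suc: "Suc l \<le> K \<Longrightarrow> block_side K l = 2 * block_side K (Suc l)"
  by (simp add: block_side_def) (metis Suc_diff_Suc Suc_le_lessD power_Suc)

lemma pow2_mult_block_side: "l \<le> K \<Longrightarrow> 2 ^ l * block_side K l = (2::nat) ^ K"
  by (simp add: block_side_def flip: power_add)

lemma block_corner_bounds:
  assumes "l \<le> K" "a < 2 ^ l"
  shows "(a + 1) * block_side K l \<le> 2 ^ K"
    and "(a + 1) * block_side K l - 1 < 2 ^ K"
    and "a * block_side K l \<le> (a + 1) * block_side K l - 1"
proof -
  have "(a + 1) * block_side K l \<le> 2 ^ l * block_side K l"
    using assms(2) by (intro mult_right_mono) auto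
  then show "(a + 1) * block_side K l \<le> 2 ^ K"
    using pow2_mult_block_side[OF assms(1)] by simp
  then show "(a + 1) * block_side K l - 1 < 2 ^ K"
    using block_side_pos[of K l] by (simp add: less_imp_diff_less)
  show "a * block_side K l \<le> (a + 1) * block_side K l - 1"
    using block_side_pos[of K l] by simp
qed

lemma block_lo_hi_bounds:
  assumes M: "biso_square (2^K) M" and l: "l \<le> K" and b: "fst b < 2 ^ l" "snd b < 2 ^ l"
  shows "0 \<le> block_lo K M l b" "block_lo K M l b \<le> block_hi K M l b" "block_hi K M l b \<le> 1"
    and "0 \<le> block_osc K M l b" "block_osc K M l b \<le> 1"
proof -
  note c1 = block_corner_bounds[OF l b(1)] and c2 = block_corner_bounds[OF l b(2)]
  show lo: "0 \<le> block_lo K M l b"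
    unfolding block_lo_def using c1 c2 by (intro biso_squareD(1)[OF M]) linarith+
  show lohi: "block_lo K M l b \<le> block_hi K M l b"
    unfolding block_lo_def block_hi_def using c1 c2 by (intro biso_squareD(3)[OF M]) auto
  show hi: "block_hi K M l b \<le> 1"
    unfolding block_hi_def using c1 c2 by (intro biso_squareD(2)[OF M]) auto
  show "0 \<le> block_osc K M l b" "block_osc K M l b \<le> 1"
    unfolding block_osc_def using lo lohi hi by linarith+
qed

lemma block_of_bounds:
  assumes M: "biso_square (2^K) M" and l: "l \<le> K" and ij: "i < 2^K" "j < 2^K"
  shows "fst (block_of K l i j) < 2 ^ l" "snd (block_of K l i j) < 2 ^ l"
    and "block_lo K M l (block_of K l i j) \<le> M i j" "M i j \<le> block_hi K M l (block_of K l i j)"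
proof -
  define h where "h = block_side K l"
  have h: "0 < h" "2 ^ l * h = 2 ^ K"
    unfolding h_def using block_side_pos pow2_mult_block_side[OF l] by auto
  show a: "fst (block_of K l i j) < 2 ^ l" and b: "snd (block_of K l i j) < 2 ^ l"
    using ij h unfolding block_of_def h_def[symmetric]
    by (simp_all add: div_less_iff_less_mult mult.commute)
  have below: "x div h * h \<le> x" and above: "x \<le> (x div h + 1) * h - 1" for x
  proof -
    have "x = x div h * h + x mod h" "(x div h + 1) * h = x div h * h + h"
      by simp_all
    then have "x < (x div h + 1) * h"
      using mod_less_divisor[OF h(1), of x] by linarith
    then show "x \<le> (x div h + 1) * h - 1" by linarith
  qed simp
  show "block_lo K M l (block_of K l i j) \<le> M i j"
    unfolding block_lo_def block_of_def h_def[symmetric] using ij below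
    by (intro biso_squareD(3)[OF M]) auto
  show "M i j \<le> block_hi K M l (block_of K l i j)"
    using block_corner_bounds(2)[OF l a] block_corner_bounds(2)[OF l b]
    unfolding block_hi_def block_of_def h_def[symmetric] using above
    by (intro biso_squareD(3)[OF M]) auto
qed

lemma parent_block_of:
  assumes "Suc l \<le> K"
  shows "parent_block (block_of K (Suc l) i j) = block_of K l i j"
proof -
  have "block_side K l = block_side K (Suc l) * 2"
    using block_side_Suc[OF assms] by simp
  then have "x div block_side K (Suc l) div 2 = x div block_side K l" for x
    by (simp add: div_mult2_eq)
  then show ?thesis
    by (simp add: parent_block_def block_of_def)
qed

lemma block_parent_bounds:
  assumes M: "biso_square (2^K) M" and l: "Suc l \<le> K"
    and b: "fst b < 2 ^ Suc l" "snd b < 2 ^ Suc l"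
  shows "fst (parent_block b) < 2 ^ l" "snd (parent_block b) < 2 ^ l"
    and "block_lo K M l (parent_block b) \<le> block_lo K M (Suc l) b"
    and "block_hi K M (Suc l) b \<le> block_hi K M l (parent_block b)"
    and "block_osc K M (Suc l) b \<le> block_osc K M l (parent_block b)"
proof -
  define h where "h = block_side K (Suc l)"
  have hS: "block_side K l = 2 * h"
    unfolding h_def by (rule block_side_Suc[OF l])
  show p: "fst (parent_block b) < 2 ^ l" "snd (parent_block b) < 2 ^ l"
    using b by (auto simp: parent_block_def)
  have lo_idx: "x div 2 * (2 * h) \<le> x * h" for x
    using mult_right_mono[of "x div 2 * 2" x h] by (simp add: mult.assoc mult.commute mult.left_commute)
  have hi_idx: "(x + 1) * h - 1 \<le> (x div 2 + 1) * (2 * h) - 1" for x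
  proof -
    have "(x + 1) * h \<le> 2 * (x div 2 + 1) * h"
      by (rule mult_right_mono) (presburger, simp)
    then show ?thesis by (simp add: mult.assoc mult.commute mult.left_commute)
  qed
  note cb1 = block_corner_bounds[OF l b(1)] and cb2 = block_corner_bounds[OF l b(2)]
  have l': "l \<le> K" using l by simp
  show lo: "block_lo K M l (parent_block b) \<le> block_lo K M (Suc l) b"
    unfolding block_lo_def parent_block_def hS h_def[symmetric] using cb1 cb2 lo_idx
    by (intro biso_squareD(3)[OF M]) (auto simp: h_def intro: le_less_trans)
  show hi: "block_hi K M (Suc l) b \<le> block_hi K M l (parent_block b)"
    using block_corner_bounds(2)[OF l' p(1)] block_corner_bounds(2)[OF l' p(2)] hi_idx
    unfolding block_hi_def parent_block_def hS h_def[symmetric]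
    by (intro biso_squareD(3)[OF M]) (auto simp: hS)
  show "block_osc K M (Suc l) b \<le> block_osc K M l (parent_block b)"
    unfolding block_osc_def using lo hi by linarith
qed

lemma sum_block_osc_le:
  assumes M: "biso_square (2^K) M" and l: "l \<le> K" and S: "S \<subseteq> {..<2^l} \<times> {..<2^l}"
  shows "(\<Sum>b\<in>S. block_osc K M l b) \<le> 2 * 2 ^ l"
proof -
  define n :: nat where "n = 2 ^ l"
  define h where "h = block_side K l"
  define P :: nat where "P = 2 ^ K"
  have ix: "min x (P - 1) < P" for x
    unfolding P_def by (simp add: min.strict_coboundedI2)
  define G where "G a c = M (min (a * h) (P - 1)) (min (c * h) (P - 1))" for a c
    \<comment> \<open>corner values, clamped to the square so that the bounds below telescope\<close>
  have G01: "0 \<le> G a c" "G a c \<le> 1" for a c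
    unfolding G_def using biso_squareD(1,2)[OF M] ix unfolding P_def by auto
  have osc_le: "block_osc K M l (a, c) \<le> (G (Suc a) (Suc c) - G (Suc a) c) + (G (Suc a) c - G a c)"
    if "a < n" "c < n" for a c
  proof -
    note ia = block_corner_bounds[OF l, of a] and ic = block_corner_bounds[OF l, of c]
    have "block_lo K M l (a, c) = G a c"
      unfolding block_lo_def G_def h_def P_def using ia ic that n_def by auto
    moreover have "block_hi K M l (a, c) \<le> G (Suc a) (Suc c)"
      unfolding block_hi_def G_def h_def P_def using ia ic that n_def
      by (intro biso_squareD(3)[OF M]) auto
    ultimately show ?thesis unfolding block_osc_def by linarith
  qed
  have rows: "(\<Sum>a<n. \<Sum>c<n. G (Suc a) (Suc c) - G (Suc a) c) \<le> real n"
  proof -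
    have "(\<Sum>a<n. \<Sum>c<n. G (Suc a) (Suc c) - G (Suc a) c) = (\<Sum>a<n. G (Suc a) n - G (Suc a) 0)"
      by (simp add: sum_lessThan_telescope)
    also have "\<dots> \<le> (\<Sum>a<n. 1)"
      using G01 by (intro sum_mono) (smt (verit))
    finally show ?thesis by simp
  qed
  have cols: "(\<Sum>a<n. \<Sum>c<n. G (Suc a) c - G a c) \<le> real n"
  proof -
    have "(\<Sum>a<n. \<Sum>c<n. G (Suc a) c - G a c) = (\<Sum>c<n. \<Sum>a<n. G (Suc a) c - G a c)"
      by (rule sum.swap)
    also have "\<dots> = (\<Sum>c<n. G n c - G 0 c)"
      by (rule sum.cong[OF refl]) (rule sum_lessThan_telescope)
    also have "\<dots> \<le> (\<Sum>c<n. 1)"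
      using G01 by (intro sum_mono) (smt (verit))
    finally show ?thesis by simp
  qed
  have "(\<Sum>b\<in>S. block_osc K M l b) \<le> (\<Sum>b\<in>{..<n} \<times> {..<n}. block_osc K M l b)"
    using S block_lo_hi_bounds(4)[OF M l] unfolding n_def by (intro sum_mono2) auto
  also have "\<dots> = (\<Sum>a<n. \<Sum>c<n. block_osc K M l (a, c))"
    by (simp add: sum.cartesian_product)
  also have "\<dots> \<le> (\<Sum>a<n. \<Sum>c<n. (G (Suc a) (Suc c) - G (Suc a) c) + (G (Suc a) c - G a c))"
    by (intro sum_mono osc_le) auto
  also have "\<dots> \<le> 2 * real n"
    using rows cols by (simp only: sum.distrib)
  finally show ?thesis unfolding n_def by simp
qed

definition threshold :: "nat \<Rightarrow> nat \<Rightarrow> real" where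
  "threshold m l = 2 ^ l / 2 ^ m"

lemma threshold_pos: "0 < threshold m l"
  by (simp add: threshold_def)

lemma threshold_Suc: "threshold m (Suc l) = 2 * threshold m l"
  by (simp add: threshold_def)

definition split_blocks :: "nat \<Rightarrow> nat \<Rightarrow> (nat \<Rightarrow> nat \<Rightarrow> real) \<Rightarrow> nat \<Rightarrow> (nat \<times> nat) set" where
  "split_blocks K m M l = {b \<in> {..<2^l} \<times> {..<2^l}. threshold m l < block_osc K M l b}"

lemma finite_split_blocks: "finite (split_blocks K m M l)"
  unfolding split_blocks_def by simp

lemma card_split_blocks_le:
  assumes M: "biso_square (2^K) M" and l: "l \<le> K"
  shows "card (split_blocks K m M l) \<le> 2 * 2 ^ m"
proof -
  have "real (card (split_blocks K m M l)) * threshold m l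
      \<le> (\<Sum>b\<in>split_blocks K m M l. block_osc K M l b)"
    using sum_mono[of "split_blocks K m M l" "\<lambda>_. threshold m l" "block_osc K M l"]
    by (simp add: split_blocks_def)
  also have "\<dots> \<le> 2 * 2 ^ l"
    by (rule sum_block_osc_le[OF M l]) (auto simp: split_blocks_def)
  finally have "real (card (split_blocks K m M l)) \<le> real (2 * 2 ^ m)"
    by (simp add: threshold_def field_simps)
  then show ?thesis
    by (simp only: of_nat_le_iff)
qed

lemma parent_block_vimage:
  "parent_block -` S = (\<lambda>(p, q). (2 * fst p + fst q, 2 * snd p + snd q)) ` (S \<times> ({..<2} \<times> {..<2}))"
proof (intro subset_antisym subsetI)
  fix b assume "b \<in> parent_block -` S"
  then have "((fst b div 2, snd b div 2), (fst b mod 2, snd b mod 2)) \<in> S \<times> ({..<2} \<times> {..<2})"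
    by (auto simp: parent_block_def)
  then show "b \<in> (\<lambda>(p, q). (2 * fst p + fst q, 2 * snd p + snd q)) ` (S \<times> ({..<2} \<times> {..<2}))"
    by (rule rev_image_eqI) simp
qed (auto simp: parent_block_def)

lemma sum_parent_block_vimage:
  fixes f :: "nat \<times> nat \<Rightarrow> 'a::comm_semiring_1"
  assumes "finite S"
  shows "(\<Sum>b\<in>parent_block -` S. f (parent_block b)) = 4 * sum f S"
proof -
  let ?child = "\<lambda>(p, q). (2 * fst p + fst q, 2 * snd p + snd q) :: nat \<times> nat"
  have "inj_on ?child (S \<times> ({..<2} \<times> {..<2}))"
    by (rule inj_onI) (auto, presburger+)
  then have "(\<Sum>b\<in>parent_block -` S. f (parent_block b))
      = (\<Sum>(p, q)\<in>S \<times> ({..<2} \<times> {..<2}). f (parent_block (?child (p, q))))"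
    unfolding parent_block_vimage by (subst sum.reindex) (auto simp: case_prod_beta)
  also have "\<dots> = (\<Sum>p\<in>S. \<Sum>q\<in>{..<2::nat} \<times> {..<2::nat}. f p)"
    unfolding sum.cartesian_product[symmetric] by (intro sum.cong) (auto simp: parent_block_def)
  finally show ?thesis
    by (simp add: card_cartesian_product sum_distrib_left)
qed

lemma finite_parent_block_vimage: "finite S \<Longrightarrow> finite (parent_block -` S)"
  unfolding parent_block_vimage by simp

lemma card_parent_block_vimage: "finite S \<Longrightarrow> card (parent_block -` S) = 4 * card S"
  using sum_parent_block_vimage[of S "\<lambda>_. 1::nat"] by simp

fun active_blocks :: "nat \<Rightarrow> nat \<Rightarrow> (nat \<Rightarrow> nat \<Rightarrow> real) \<Rightarrow> nat \<Rightarrow> (nat \<times> nat) set" where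
  "active_blocks K m M 0 = {(0, 0)}"
| "active_blocks K m M (Suc l) = parent_block -` split_blocks K m M l"

lemma active_blocks_bounds: "b \<in> active_blocks K m M l \<Longrightarrow> fst b < 2 ^ l \<and> snd b < 2 ^ l"
  by (cases l) (auto simp: split_blocks_def parent_block_def)

lemma finite_active_blocks: "finite (active_blocks K m M l)"
  by (cases l) (auto intro: finite_parent_block_vimage finite_split_blocks)

lemma card_active_blocks_le:
  assumes M: "biso_square (2^K) M" and l: "l \<le> K"
  shows "card (active_blocks K m M l) \<le> 8 * 2 ^ m"
proof (cases l)
  case (Suc l')
  then show ?thesis
    using card_split_blocks_le[OF M, of l' m] l
    by (simp add: card_parent_block_vimage[OF finite_split_blocks])
qed simp

text \<open>A block can only split if its parent did, because oscillation decreases from parent to child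
  while the threshold doubles.\<close>
lemma split_blocks_subset_active_blocks:
  assumes M: "biso_square (2^K) M" and l: "l \<le> K"
  shows "split_blocks K m M l \<subseteq> active_blocks K m M l"
proof (cases l)
  case (Suc l')
  show ?thesis
  proof
    fix b assume b: "b \<in> split_blocks K m M l"
    then have "fst b < 2 ^ Suc l'" "snd b < 2 ^ Suc l'"
      using Suc by (auto simp: split_blocks_def)
    note pb = block_parent_bounds[OF M l[unfolded Suc] this]
    have "threshold m l' < block_osc K M l' (parent_block b)"
      using b Suc pb(5) threshold_Suc[of m l'] threshold_pos[of m l'] by (auto simp: split_blocks_def)
    then show "b \<in> active_blocks K m M l"
      using Suc pb(1,2) by (auto simp: split_blocks_def mem_Times_iff)
  qed
qed (auto simp: split_blocks_def)

section \<open>The multiscale code\<close>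

definition quantized_lo :: "nat \<Rightarrow> nat \<Rightarrow> (nat \<Rightarrow> nat \<Rightarrow> real) \<Rightarrow> nat \<Rightarrow> nat \<times> nat \<Rightarrow> int" where
  "quantized_lo K m M l b = \<lfloor>block_lo K M l b / threshold m l\<rfloor>"

text \<open>The quantized corner value of a block is recorded relative to that of its parent. The threshold
  doubles from parent to child, so the parent's value at the child's resolution is its own halved.\<close>
fun lo_increment :: "nat \<Rightarrow> nat \<Rightarrow> (nat \<Rightarrow> nat \<Rightarrow> real) \<Rightarrow> nat \<Rightarrow> nat \<times> nat \<Rightarrow> nat" where
  "lo_increment K m M 0 b = nat (quantized_lo K m M 0 b)"
| "lo_increment K m M (Suc l) b =
     nat (quantized_lo K m M (Suc l) b - quantized_lo K m M l (parent_block b) div 2)"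

lemma floor_divide_double:
  fixes x t :: real
  assumes "0 < t"
  shows "\<lfloor>x / (2 * t)\<rfloor> = \<lfloor>x / t\<rfloor> div 2"
  using floor_divide_real_eq_div[of 2 "x / t"] by (simp add: mult.commute)

lemma quantized_lo_parent_le:
  assumes M: "biso_square (2^K) M" and l: "Suc l \<le> K"
    and b: "fst b < 2 ^ Suc l" "snd b < 2 ^ Suc l"
  shows "quantized_lo K m M l (parent_block b) div 2 \<le> quantized_lo K m M (Suc l) b"
proof -
  have "\<lfloor>block_lo K M l (parent_block b) / threshold m (Suc l)\<rfloor> \<le> quantized_lo K m M (Suc l) b"
    unfolding quantized_lo_def using block_parent_bounds(3)[OF M l b] threshold_pos[of m "Suc l"]
    by (intro floor_mono divide_right_mono) auto
  then show ?thesis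
    by (simp add: quantized_lo_def threshold_Suc floor_divide_double[OF threshold_pos])
qed

lemma lo_increment_Suc_le:
  assumes M: "biso_square (2^K) M" and l: "Suc l \<le> K"
    and b: "fst b < 2 ^ Suc l" "snd b < 2 ^ Suc l"
  shows "real (lo_increment K m M (Suc l) b)
    \<le> block_osc K M l (parent_block b) / threshold m (Suc l) + 1"
proof -
  define t where "t = threshold m (Suc l)"
  define x where "x = block_lo K M (Suc l) b"
  define y where "y = block_lo K M l (parent_block b)"
  have t: "0 < t"
    unfolding t_def by (rule threshold_pos)
  have "x - y \<le> block_osc K M l (parent_block b)"
    using block_lo_hi_bounds(2)[OF M l b] block_parent_bounds(4)[OF M l b]
    unfolding x_def y_def block_osc_def by linarith
  have "quantized_lo K m M l (parent_block b) div 2 = \<lfloor>y / t\<rfloor>"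
    by (simp add: y_def t_def quantized_lo_def threshold_Suc floor_divide_double[OF threshold_pos])
  then have "real (lo_increment K m M (Suc l) b) = real_of_int (\<lfloor>x / t\<rfloor> - \<lfloor>y / t\<rfloor>)"
    using quantized_lo_parent_le[OF M l b, of m] by (simp add: x_def t_def quantized_lo_def)
  also have "\<dots> \<le> (x - y) / t + 1"
    unfolding diff_divide_distrib of_int_diff
    using of_int_floor_le[of "x / t"] real_of_int_floor_add_one_gt[of "y / t"] by linarith
  also have "\<dots> \<le> block_osc K M l (parent_block b) / t + 1"
    using \<open>x - y \<le> _\<close> t by (simp add: divide_right_mono)
  finally show ?thesis unfolding t_def .
qed

lemma sum_lo_increment_le:
  assumes M: "biso_square (2^K) M" and l: "l \<le> K"
  shows "sum (lo_increment K m M l) (active_blocks K m M l) \<le> 12 * 2 ^ m"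
proof (cases l)
  case 0
  have "block_lo K M 0 (0, 0) * 2 ^ m \<le> real (12 * 2 ^ m)"
    using block_lo_hi_bounds(2,3)[OF M, of 0 "(0, 0)"] by simp
  then have "\<lfloor>block_lo K M 0 (0, 0) * 2 ^ m\<rfloor> \<le> int (12 * 2 ^ m)"
    by (metis floor_mono floor_of_nat)
  then show ?thesis
    using 0 by (simp add: quantized_lo_def threshold_def nat_le_iff)
next
  case (Suc l')
  define S where "S = split_blocks K m M l'"
  define t where "t = threshold m (Suc l')"
  have l': "Suc l' \<le> K" "l' \<le> K"
    using l Suc by simp_all
  have "real (sum (lo_increment K m M l) (active_blocks K m M l))
      \<le> (\<Sum>b\<in>parent_block -` S. block_osc K M l' (parent_block b) / t + 1)"
    unfolding Suc S_def t_def of_nat_sum active_blocks.simps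
    using lo_increment_Suc_le[OF M l'(1)] active_blocks_bounds[of _ K m M "Suc l'"]
    by (intro sum_mono) simp
  also have "\<dots> = 4 * (\<Sum>p\<in>S. block_osc K M l' p / t + 1)"
    unfolding S_def by (rule sum_parent_block_vimage[OF finite_split_blocks])
  also have "\<dots> = 4 / t * (\<Sum>p\<in>S. block_osc K M l' p) + 4 * real (card S)"
    by (simp add: sum.distrib flip: sum_divide_distrib)
  also have "\<dots> \<le> 4 / t * (2 * 2 ^ l') + 4 * (2 * 2 ^ m)"
  proof -
    have "(\<Sum>p\<in>S. block_osc K M l' p) \<le> 2 * 2 ^ l'"
      unfolding S_def by (rule sum_block_osc_le[OF M l'(2)]) (auto simp: split_blocks_def)
    moreover have "real (card S) \<le> 2 * 2 ^ m"
      using of_nat_mono[OF card_split_blocks_le[OF M l'(2), of m]] unfolding S_def by simp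
    ultimately show ?thesis
      using threshold_pos[of m "Suc l'"] unfolding t_def by (intro add_mono mult_left_mono) auto
  qed
  also have "\<dots> = real (12 * 2 ^ m)"
    by (simp add: t_def threshold_def field_simps)
  finally show ?thesis
    by (simp only: of_nat_le_iff)
qed

lemma card_bounded_sum_functions:
  assumes "finite D"
  shows "finite {f \<in> D \<rightarrow>\<^sub>E (UNIV::nat set). sum f D \<le> T}
    \<and> card {f \<in> D \<rightarrow>\<^sub>E (UNIV::nat set). sum f D \<le> T} \<le> 2 ^ (card D + T)"
  using assms
proof (induction D arbitrary: T rule: finite_induct)
  case empty
  then show ?case by simp
next
  case (insert x F)
  let ?A = "\<lambda>D T. {f \<in> D \<rightarrow>\<^sub>E (UNIV::nat set). sum f D \<le> T}"
  let ?U = "\<Union>a\<in>{..T}. (\<lambda>g. g(x := a)) ` ?A F (T - a)"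
  have sub: "?A (insert x F) T \<subseteq> ?U"
  proof
    fix f assume f: "f \<in> ?A (insert x F) T"
    have "f x \<le> T" "sum f F \<le> T - f x"
      using f insert(1,2) by auto
    then have "restrict f F \<in> ?A F (T - f x)" "f x \<in> {..T}"
      by (auto simp: PiE_def)
    moreover have "f = (restrict f F)(x := f x)"
      using f insert(2) by (auto simp: PiE_def extensional_def fun_eq_iff)
    ultimately show "f \<in> ?U" by blast
  qed
  have fin: "finite ?U"
    using insert.IH by blast
  have geometric: "(\<Sum>a\<le>T. (2::nat) ^ (T - a)) < 2 ^ Suc T"
  proof -
    have "(\<Sum>a\<le>T. (2::nat) ^ (T - a)) = (\<Sum>a=0..<Suc T. 2 ^ a)"
      using sum.nat_diff_reindex[of "\<lambda>a. (2::nat) ^ a" "Suc T"]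
      by (simp add: lessThan_Suc_atMost atLeast0LessThan)
    then show ?thesis by (simp add: sum_power2 mult_2)
  qed
  have "card (?A (insert x F) T) \<le> card ?U"
    by (rule card_mono[OF fin sub])
  also have "\<dots> \<le> (\<Sum>a\<le>T. card ((\<lambda>g. g(x := a)) ` ?A F (T - a)))"
    by (rule card_UN_le) simp
  also have "\<dots> \<le> (\<Sum>a\<le>T. 2 ^ (card F + (T - a)))"
    using insert.IH by (intro sum_mono) (meson card_image_le le_trans)
  also have "\<dots> = 2 ^ card F * (\<Sum>a\<le>T. 2 ^ (T - a))"
    by (simp only: sum_distrib_left power_add)
  also have "\<dots> \<le> 2 ^ card F * 2 ^ Suc T"
    using geometric by simp
  also have "\<dots> = 2 ^ (card (insert x F) + T)"
    using insert(1,2) by (simp add: power_add)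
  finally show ?case
    using finite_subset[OF sub fin] by blast
qed

definition level_code :: "nat \<Rightarrow> nat \<Rightarrow> (nat \<Rightarrow> nat \<Rightarrow> real) \<Rightarrow> nat
    \<Rightarrow> (nat \<times> nat) set \<times> (nat \<times> nat \<Rightarrow> nat)" where
  "level_code K m M l = (split_blocks K m M l, restrict (lo_increment K m M l) (active_blocks K m M l))"

definition multiscale_code :: "nat \<Rightarrow> nat \<Rightarrow> (nat \<Rightarrow> nat \<Rightarrow> real)
    \<Rightarrow> ((nat \<times> nat) set \<times> (nat \<times> nat \<Rightarrow> nat)) list" where
  "multiscale_code K m M = map (level_code K m M) [0..<Suc (min K m)]"

definition level_codes :: "nat \<Rightarrow> (nat \<times> nat) set \<Rightarrow> ((nat \<times> nat) set \<times> (nat \<times> nat \<Rightarrow> nat)) set" where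
  "level_codes m D = {(S, f). S \<subseteq> D \<and> card S \<le> 2 * 2 ^ m \<and> f \<in> D \<rightarrow>\<^sub>E UNIV \<and> sum f D \<le> 12 * 2 ^ m}"

fun code_space :: "nat \<Rightarrow> nat \<Rightarrow> ((nat \<times> nat) set \<times> (nat \<times> nat \<Rightarrow> nat)) list set" where
  "code_space m 0 = (\<lambda>c. [c]) ` level_codes m {(0, 0)}"
| "code_space m (Suc l) =
     (\<Union>cs\<in>code_space m l. (\<lambda>c. cs @ [c]) ` level_codes m (parent_block -` fst (last cs)))"

lemma level_code_in_level_codes:
  assumes M: "biso_square (2^K) M" and l: "l \<le> K"
  shows "level_code K m M l \<in> level_codes m (active_blocks K m M l)"
  using split_blocks_subset_active_blocks[OF M l] card_split_blocks_le[OF M l]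
    sum_lo_increment_le[OF M l, of m]
  by (simp add: level_code_def level_codes_def)

lemma level_codes_prefix_in_code_space:
  assumes M: "biso_square (2^K) M"
  shows "l \<le> K \<Longrightarrow> map (level_code K m M) [0..<Suc l] \<in> code_space m l"
proof (induction l)
  case 0
  then show ?case using level_code_in_level_codes[OF M, of 0 m] by simp
next
  case (Suc l)
  let ?cs = "map (level_code K m M) [0..<Suc l]"
  have "fst (last ?cs) = split_blocks K m M l"
    by (simp add: level_code_def)
  then have "level_code K m M (Suc l) \<in> level_codes m (parent_block -` fst (last ?cs))"
    using level_code_in_level_codes[OF M Suc.prems] by simp
  moreover have "?cs \<in> code_space m l"
    using Suc by simp
  ultimately have "?cs @ [level_code K m M (Suc l)] \<in> code_space m (Suc l)"
    by (simp only: code_space.simps) blast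
  then show ?case by simp
qed

lemma nth_multiscale_code: "l \<le> min K m \<Longrightarrow> multiscale_code K m M ! l = level_code K m M l"
  unfolding multiscale_code_def by (simp add: less_Suc_eq_le del: upt_Suc)

lemma multiscale_code_in_code_space:
  "biso_square (2^K) M \<Longrightarrow> multiscale_code K m M \<in> code_space m (min K m)"
  unfolding multiscale_code_def by (rule level_codes_prefix_in_code_space) simp_all

lemma card_level_codes:
  assumes "finite D" "card D \<le> 8 * 2 ^ m"
  shows "finite (level_codes m D)" "card (level_codes m D) \<le> 2 ^ (28 * 2 ^ m)"
proof -
  let ?B = "{f \<in> D \<rightarrow>\<^sub>E (UNIV::nat set). sum f D \<le> 12 * 2 ^ m}"
  have sub: "level_codes m D \<subseteq> Pow D \<times> ?B"
    unfolding level_codes_def by auto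
  note B = card_bounded_sum_functions[OF assms(1), of "12 * 2 ^ m"]
  have fin: "finite (Pow D \<times> ?B)"
    using B assms(1) by simp
  then show "finite (level_codes m D)"
    using sub by (rule finite_subset[rotated])
  have "card (level_codes m D) \<le> card (Pow D \<times> ?B)"
    by (rule card_mono[OF fin sub])
  also have "\<dots> \<le> 2 ^ card D * 2 ^ (card D + 12 * 2 ^ m)"
    using B assms(1) by (simp add: card_cartesian_product card_Pow)
  also have "\<dots> \<le> 2 ^ (28 * 2 ^ m)"
    using assms(2) by (simp flip: power_add) 
  finally show "card (level_codes m D) \<le> 2 ^ (28 * 2 ^ m)" .
qed

lemma card_code_space:
  "finite (code_space m l) \<and> card (code_space m l) \<le> (2 ^ (28 * 2 ^ m)) ^ Suc l
    \<and> (\<forall>cs\<in>code_space m l. finite (fst (last cs)) \<and> card (fst (last cs)) \<le> 2 * 2 ^ m)"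
proof (induction l)
  case 0
  have "finite (level_codes m {(0, 0)})" "card (level_codes m {(0, 0)}) \<le> 2 ^ (28 * 2 ^ m)"
    using card_level_codes[of "{(0, 0)}" m] by auto
  moreover have "card ((\<lambda>c. [c]) ` level_codes m {(0, 0)}) \<le> card (level_codes m {(0, 0)})"
    by (rule card_image_le) fact
  ultimately show ?case
    by (auto simp: level_codes_def intro: finite_subset)
next
  case (Suc l)
  have next_level: "finite (level_codes m (parent_block -` fst (last cs)))
      \<and> card (level_codes m (parent_block -` fst (last cs))) \<le> 2 ^ (28 * 2 ^ m)"
    if "cs \<in> code_space m l" for cs
    using Suc.IH that card_level_codes[OF finite_parent_block_vimage, of "fst (last cs)" m]
    by (simp add: card_parent_block_vimage)
  have fin: "finite (code_space m (Suc l))"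
    using Suc.IH next_level by auto
  have "card (code_space m (Suc l))
      \<le> (\<Sum>cs\<in>code_space m l. card ((\<lambda>c. cs @ [c]) ` level_codes m (parent_block -` fst (last cs))))"
    unfolding code_space.simps by (rule card_UN_le) (use Suc.IH in blast)
  also have "\<dots> \<le> (\<Sum>cs\<in>code_space m l. 2 ^ (28 * 2 ^ m))"
    by (rule sum_mono) (meson next_level card_image_le le_trans)
  also have "\<dots> \<le> (2 ^ (28 * 2 ^ m)) ^ Suc (Suc l)"
    using Suc.IH by simp
  finally have "card (code_space m (Suc l)) \<le> (2 ^ (28 * 2 ^ m)) ^ Suc (Suc l)" .
  moreover have "finite (fst (last cs)) \<and> card (fst (last cs)) \<le> 2 * 2 ^ m"
    if cs: "cs \<in> code_space m (Suc l)" for cs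
  proof -
    obtain cs' c where "cs' \<in> code_space m l" "c \<in> level_codes m (parent_block -` fst (last cs'))"
      and "cs = cs' @ [c]"
      using cs by auto
    moreover from this Suc.IH have "finite (parent_block -` fst (last cs'))"
      by (blast intro: finite_parent_block_vimage)
    ultimately show ?thesis
      by (auto simp: level_codes_def) (meson finite_subset)
  qed
  ultimately show ?case
    using fin by blast
qed

lemma floor_eq_imp_dist_less:
  fixes x y t :: real
  assumes t: "0 < t" and eq: "\<lfloor>x / t\<rfloor> = \<lfloor>y / t\<rfloor>"
  shows "\<bar>x - y\<bar> < t"
proof -
  have "\<bar>x / t - y / t\<bar> < 1"
    using floor_correct[of "x / t"] floor_correct[of "y / t"] eq by linarith
  then have "\<bar>x - y\<bar> / t < 1"
    using t by (simp add: diff_divide_distrib[symmetric])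
  with t show ?thesis by simp
qed

lemma card_cells_in_blocks:
  assumes l: "l \<le> K" and D: "finite D"
  shows "(\<Sum>i<(2::nat)^K. \<Sum>j<(2::nat)^K. of_bool (block_of K l i j \<in> D) :: real)
    \<le> real (card D) * real (block_side K l) ^ 2"
proof -
  define h where "h = block_side K l"
  have h: "0 < h"
    unfolding h_def by (rule block_side_pos)
  let ?cells = "\<lambda>b. {fst b * h..<(fst b + 1) * h} \<times> {snd b * h..<(snd b + 1) * h}"
  have in_block: "x \<in> {x div h * h..<(x div h + 1) * h}" for x
  proof -
    have "x = x div h * h + x mod h" "(x div h + 1) * h = x div h * h + h"
      by simp_all
    then have "x < (x div h + 1) * h"
      using mod_less_divisor[OF h, of x] by linarith
    then show ?thesis by simp
  qed
  have sub: "({..<2^K} \<times> {..<2^K}) \<inter> {c. block_of K l (fst c) (snd c) \<in> D} \<subseteq> (\<Union>b\<in>D. ?cells b)"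
  proof
    fix c assume "c \<in> ({..<2^K} \<times> {..<2^K}) \<inter> {c. block_of K l (fst c) (snd c) \<in> D}"
    then have "(fst c div h, snd c div h) \<in> D"
      by (simp add: block_of_def h_def)
    then show "c \<in> (\<Union>b\<in>D. ?cells b)"
      using in_block[of "fst c"] in_block[of "snd c"]
      by (intro UN_I[of "(fst c div h, snd c div h)"]) (auto simp: mem_Times_iff)
  qed
  have "(\<Sum>i<(2::nat)^K. \<Sum>j<(2::nat)^K. of_bool (block_of K l i j \<in> D) :: real)
      = (\<Sum>c\<in>{..<2^K} \<times> {..<2^K}. of_bool (block_of K l (fst c) (snd c) \<in> D))"
    by (subst sum.cartesian_product) (rule sum.cong, auto)
  also have "\<dots> = real (card (({..<2^K} \<times> {..<2^K}) \<inter> {c. block_of K l (fst c) (snd c) \<in> D}))"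
    by simp
  also have "\<dots> \<le> real (card (\<Union>b\<in>D. ?cells b))"
    using D by (intro of_nat_mono card_mono[OF _ sub]) auto
  also have "card (\<Union>b\<in>D. ?cells b) \<le> (\<Sum>b\<in>D. card (?cells b))"
    by (rule card_UN_le[OF D])
  also have "\<dots> = card D * h ^ 2"
    by (simp add: card_cartesian_product power2_eq_square)
  finally show ?thesis
    unfolding h_def by simp
qed

lemma split_blocks_min_empty:
  assumes M: "biso_square (2^K) M"
  shows "split_blocks K m M (min K m) = {}"
proof -
  have "block_osc K M (min K m) b \<le> threshold m (min K m)"
    if b: "fst b < 2 ^ min K m" "snd b < 2 ^ min K m" for b
  proof (cases "m \<le> K")
    case True
    then show ?thesis
      using block_lo_hi_bounds(5)[OF M _ b] by (simp add: threshold_def)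
  next
    case False
    then have "block_osc K M (min K m) b = 0"
      by (simp add: block_osc_def block_hi_def block_lo_def block_side_def)
    then show ?thesis
      using threshold_pos[of m "min K m"] by simp
  qed
  then show ?thesis
    by (fastforce simp: split_blocks_def)
qed

locale equal_multiscale_codes =
  fixes K m :: nat and M M' :: "nat \<Rightarrow> nat \<Rightarrow> real"
  assumes biso: "biso_square (2^K) M" "biso_square (2^K) M'"
    and code_eq: "multiscale_code K m M = multiscale_code K m M'"
begin

lemma level_code_eq: "l \<le> min K m \<Longrightarrow> level_code K m M l = level_code K m M' l"
  using code_eq nth_multiscale_code by metis

lemma split_blocks_eq: "l \<le> min K m \<Longrightarrow> split_blocks K m M l = split_blocks K m M' l"
  using level_code_eq by (simp add: level_code_def)

lemma active_blocks_eq: "l \<le> min K m \<Longrightarrow> active_blocks K m M l = active_blocks K m M' l"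
  by (cases l) (simp_all add: split_blocks_eq)

lemma lo_increment_eq:
  assumes "l \<le> min K m" "b \<in> active_blocks K m M l"
  shows "lo_increment K m M l b = lo_increment K m M' l b"
  using level_code_eq[OF assms(1)] active_blocks_eq[OF assms(1)] assms(2)
  by (simp add: level_code_def) (metis restrict_apply')

lemma quantized_lo_eq:
  "l \<le> min K m \<Longrightarrow> b \<in> active_blocks K m M l \<Longrightarrow> quantized_lo K m M l b = quantized_lo K m M' l b"
proof (induction l arbitrary: b)
  case 0
  then have "0 \<le> quantized_lo K m M 0 b" "0 \<le> quantized_lo K m M' 0 b"
    using block_lo_hi_bounds(1)[OF biso(1), of 0 b] block_lo_hi_bounds(1)[OF biso(2), of 0 b]
      threshold_pos[of m 0] by (auto simp: quantized_lo_def)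
  then show ?case
    using lo_increment_eq[OF 0] by simp
next
  case (Suc l)
  have l: "Suc l \<le> K"
    using Suc.prems by simp
  have b: "fst b < 2 ^ Suc l" "snd b < 2 ^ Suc l"
    using active_blocks_bounds[OF Suc.prems(2)] by auto
  have "parent_block b \<in> active_blocks K m M l"
    using Suc.prems(2) split_blocks_subset_active_blocks[OF biso(1), of l m] l by auto
  then have parent: "quantized_lo K m M l (parent_block b) = quantized_lo K m M' l (parent_block b)"
    using Suc by simp
  show ?case
    using lo_increment_eq[OF Suc.prems] parent
      quantized_lo_parent_le[OF biso(1) l b, of m] quantized_lo_parent_le[OF biso(2) l b, of m]
    by simp
qed

text \<open>A cell is controlled at the first level at which its block is not split: that block is
  active, and both matrices oscillate there by at most the threshold around corner values that
  the code pins down to within the threshold.\<close>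
lemma cell_sq_error_le:
  assumes ij: "i < 2^K" "j < 2^K"
  shows "(M i j - M' i j)\<^sup>2
    \<le> (\<Sum>l\<le>min K m. 4 * threshold m l ^ 2 * of_bool (block_of K l i j \<in> active_blocks K m M l))"
proof -
  define L where "L = (LEAST l. block_of K l i j \<notin> split_blocks K m M l)"
  have top: "block_of K (min K m) i j \<notin> split_blocks K m M (min K m)"
    using split_blocks_min_empty[OF biso(1)] by simp
  have L: "L \<le> min K m" "block_of K L i j \<notin> split_blocks K m M L"
    unfolding L_def by (rule Least_le, rule top, rule LeastI, rule top)
  have LK: "L \<le> K"
    using L(1) by simp
  have active: "block_of K L i j \<in> active_blocks K m M L"
  proof (cases L)
    case 0
    then show ?thesis
      using ij by (simp add: block_of_def block_side_def)
  next
    case (Suc l)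
    then have "block_of K l i j \<in> split_blocks K m M l"
      using not_less_Least[of l "\<lambda>l. block_of K l i j \<notin> split_blocks K m M l"] L_def by auto
    then show ?thesis
      using Suc parent_block_of[of l K i j] LK by simp
  qed
  define b where "b = block_of K L i j"
  note cb = block_of_bounds[OF biso(1) LK ij] and cb' = block_of_bounds[OF biso(2) LK ij]
  have "b \<notin> split_blocks K m M' L"
    using L split_blocks_eq[OF L(1)] unfolding b_def by simp
  then have "block_osc K M L b \<le> threshold m L" "block_osc K M' L b \<le> threshold m L"
    using L(2) cb(1,2) unfolding b_def by (simp_all add: split_blocks_def mem_Times_iff)
  moreover have "\<bar>block_lo K M L b - block_lo K M' L b\<bar> < threshold m L"
    using quantized_lo_eq[OF L(1) active] threshold_pos
    unfolding b_def quantized_lo_def by (intro floor_eq_imp_dist_less)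
  ultimately have "\<bar>M i j - M' i j\<bar> \<le> 2 * threshold m L"
    using cb(3,4) cb'(3,4) unfolding b_def block_osc_def abs_le_iff abs_less_iff by linarith
  then have "(M i j - M' i j)\<^sup>2 \<le> 4 * threshold m L ^ 2"
    using power_mono[of "\<bar>M i j - M' i j\<bar>" "2 * threshold m L" 2] by (simp add: power_mult_distrib)
  also have "\<dots> = 4 * threshold m L ^ 2 * of_bool (block_of K L i j \<in> active_blocks K m M L)"
    using active by simp
  also have "\<dots>
      \<le> (\<Sum>l\<le>min K m. 4 * threshold m l ^ 2 * of_bool (block_of K l i j \<in> active_blocks K m M l))"
    by (rule member_le_sum) (use L(1) in auto)
  finally show ?thesis .
qed

theorem sum_sq_error_le:
  "(\<Sum>i<(2::nat)^K. \<Sum>j<(2::nat)^K. (M i j - M' i j)\<^sup>2) \<le> 32 * real (Suc (min K m)) * 4 ^ K / 2 ^ m"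
proof -
  let ?in = "\<lambda>l i j. of_bool (block_of K l i j \<in> active_blocks K m M l) :: real"
  have "(\<Sum>i<(2::nat)^K. \<Sum>j<(2::nat)^K. (M i j - M' i j)\<^sup>2)
      \<le> (\<Sum>i<(2::nat)^K. \<Sum>j<(2::nat)^K. \<Sum>l\<le>min K m. 4 * threshold m l ^ 2 * ?in l i j)"
    by (intro sum_mono cell_sq_error_le) auto
  also have "\<dots> = (\<Sum>i<(2::nat)^K. \<Sum>l\<le>min K m. \<Sum>j<(2::nat)^K. 4 * threshold m l ^ 2 * ?in l i j)"
    by (rule sum.cong[OF refl]) (rule sum.swap)
  also have "\<dots> = (\<Sum>l\<le>min K m. 4 * threshold m l ^ 2 * (\<Sum>i<(2::nat)^K. \<Sum>j<(2::nat)^K. ?in l i j))"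
    by (subst sum.swap) (simp only: sum_distrib_left)
  also have "\<dots> \<le> (\<Sum>l\<le>min K m. 32 * 4 ^ K / 2 ^ m)"
  proof (rule sum_mono)
    fix l assume "l \<in> {..min K m}"
    then have l: "l \<le> K" by simp
    have "(2::real) ^ l * real (block_side K l) = 2 ^ K"
      using arg_cong[OF pow2_mult_block_side[OF l], of real] by simp
    then have side: "threshold m l * real (block_side K l) = 2 ^ K / 2 ^ m"
      by (simp add: threshold_def)
    have "4 * threshold m l ^ 2 * (\<Sum>i<(2::nat)^K. \<Sum>j<(2::nat)^K. ?in l i j)
        \<le> 4 * threshold m l ^ 2 * (real (card (active_blocks K m M l)) * real (block_side K l) ^ 2)"
      by (intro mult_left_mono card_cells_in_blocks[OF l finite_active_blocks]) simp
    also have "\<dots> \<le> 4 * threshold m l ^ 2 * (8 * 2 ^ m * real (block_side K l) ^ 2)"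
      using of_nat_mono[OF card_active_blocks_le[OF biso(1) l, of m]]
      by (intro mult_left_mono mult_right_mono) auto
    also have "\<dots> = 32 * 2 ^ m * (threshold m l * real (block_side K l)) ^ 2"
      by (simp add: power_mult_distrib)
    also have "\<dots> = 32 * 4 ^ K / 2 ^ m"
      unfolding side by (simp add: power_divide power2_eq_square field_simps flip: power_mult_distrib)
    finally show "4 * threshold m l ^ 2 * (\<Sum>i<(2::nat)^K. \<Sum>j<(2::nat)^K. ?in l i j)
        \<le> 32 * 4 ^ K / 2 ^ m" .
  qed
  also have "\<dots> = 32 * real (Suc (min K m)) * 4 ^ K / 2 ^ m"
    by simp
  finally show ?thesis .
qed

end

text \<open>Repeating every column \<open>n1 div n2\<close> times multiplies squared Frobenius distances by that factor,
  and padding with ones keeps the resulting square bi-isotonic.\<close>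
definition column_stretch :: "nat \<Rightarrow> nat \<Rightarrow> (nat \<Rightarrow> nat \<Rightarrow> real) \<Rightarrow> nat \<Rightarrow> nat \<Rightarrow> real" where
  "column_stretch n1 n2 M = (\<lambda>i j. if i < n1 \<and> j < n1 div n2 * n2 then M i (j div (n1 div n2)) else 1)"

lemma column_stretch_biso_square:
  assumes M: "M \<in> BISO n1 n2" and n: "1 \<le> n2" "n2 \<le> n1"
  shows "biso_square P (column_stretch n1 n2 M)"
proof -
  define a where "a = n1 div n2"
  have a: "0 < a"
    unfolding a_def using n by (simp add: div_greater_zero_iff)
  have col: "j div a < n2" if "j < a * n2" for j
    using that a by (simp add: div_less_iff_less_mult mult.commute)
  have bounds: "0 \<le> column_stretch n1 n2 M i j \<and> column_stretch n1 n2 M i j \<le> 1" for i j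
    unfolding column_stretch_def a_def[symmetric] using BISO_bounds[OF M _ col] by auto
  have mono: "column_stretch n1 n2 M i j \<le> column_stretch n1 n2 M i' j'"
    if "i \<le> i'" "j \<le> j'" for i i' j j'
  proof (cases "i' < n1 \<and> j' < a * n2")
    case True
    then have "i < n1" "j < a * n2" "j div a \<le> j' div a"
      using that by (auto intro: div_le_mono)
    then have "M i (j div a) \<le> M i' (j' div a)"
      using True col BISO_mono_row_index[OF M] BISO_mono_col_index[OF M] that(1)
      by (meson order_trans)
    then show ?thesis
      unfolding column_stretch_def a_def[symmetric] using True \<open>i < n1\<close> \<open>j < a * n2\<close> by simp
  next
    case False
    then show ?thesis
      using bounds[of i j] unfolding column_stretch_def a_def[symmetric] by auto
  qed
  show ?thesis
    unfolding biso_square_def using bounds mono by blast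
qed

lemma sum_lessThan_mult_div:
  fixes g :: "nat \<Rightarrow> 'a::comm_semiring_1"
  shows "(\<Sum>j<a * n. g (j div a)) = of_nat a * (\<Sum>j<n. g j)"
proof (cases "a = 0")
  case False
  have "(\<Sum>j<a * n. g (j div a)) = (\<Sum>k<n. \<Sum>j\<in>{k * a..<k * a + a}. g (j div a))"
    using sum.nat_group[of "\<lambda>j. g (j div a)" a n] by (simp add: mult.commute)
  also have "\<dots> = (\<Sum>k<n. \<Sum>j\<in>{k * a..<k * a + a}. g k)"
    using False
    by (intro sum.cong refl) (auto intro!: arg_cong[of _ _ g] div_nat_eqI simp: mult.commute)
  finally show ?thesis
    by (simp add: sum_distrib_left)
qed simp

lemma sum_sq_column_stretch:
  assumes K: "n1 \<le> 2 ^ K"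
  shows "real (n1 div n2) * (\<Sum>i<n1. \<Sum>j<n2. (M i j - M' i j)\<^sup>2)
    \<le> (\<Sum>i<(2::nat)^K. \<Sum>j<(2::nat)^K. (column_stretch n1 n2 M i j - column_stretch n1 n2 M' i j)\<^sup>2)"
proof -
  define a where "a = n1 div n2"
  let ?D = "\<lambda>i j. (column_stretch n1 n2 M i j - column_stretch n1 n2 M' i j)\<^sup>2"
  have "a * n2 \<le> 2 ^ K"
    using K div_times_less_eq_dividend[of n1 n2] unfolding a_def by linarith
  have "real a * (\<Sum>i<n1. \<Sum>j<n2. (M i j - M' i j)\<^sup>2)
      = (\<Sum>i<n1. real a * (\<Sum>j<n2. (M i j - M' i j)\<^sup>2))"
    by (rule sum_distrib_left)
  also have "\<dots> = (\<Sum>i<n1. \<Sum>j<a * n2. (M i (j div a) - M' i (j div a))\<^sup>2)"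
    by (rule sum.cong[OF refl]) (rule sum_lessThan_mult_div[symmetric])
  also have "\<dots> = (\<Sum>i<n1. \<Sum>j<a * n2. ?D i j)"
    by (intro sum.cong refl) (simp add: column_stretch_def a_def)
  also have "\<dots> \<le> (\<Sum>i<n1. \<Sum>j<(2::nat)^K. ?D i j)"
    using \<open>a * n2 \<le> 2 ^ K\<close> by (intro sum_mono sum_mono2) auto
  also have "\<dots> \<le> (\<Sum>i<(2::nat)^K. \<Sum>j<(2::nat)^K. ?D i j)"
    using K by (intro sum_mono2 sum_nonneg) auto
  finally show ?thesis
    unfolding a_def .
qed

lemma exists_pow2_between:
  fixes n :: nat
  assumes "1 \<le> n"
  obtains K where "n \<le> 2 ^ K" "2 ^ K < 2 * n"
proof -
  define K where "K = (LEAST K. n \<le> 2 ^ K)"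
  have "n \<le> 2 ^ K"
    unfolding K_def by (rule LeastI[of _ n]) (simp add: less_imp_le)
  moreover have "2 ^ K < 2 * n"
  proof (cases K)
    case (Suc k)
    then have "\<not> n \<le> 2 ^ k"
      using not_less_Least[of k "\<lambda>K. n \<le> 2 ^ K"] K_def by auto
    then show ?thesis using Suc by simp
  qed (use assms in simp)
  ultimately show ?thesis using that by blast
qed

theorem ln_covering_number_BISO_frob_le_multiscale:
  assumes n: "1 \<le> n2" "n2 \<le> n1" and eps: "0 < eps"
    and m: "256 * (real m + 1) * (real n1 * real n2) \<le> eps\<^sup>2 * 2 ^ m"
  shows "ln (real (covering_number eps (BISO n1 n2) (frob_dist n1 n2)))
    \<le> 28 * 2 ^ m * (real m + 1) * ln 2"
proof -
  obtain K where K: "n1 \<le> 2 ^ K" "2 ^ K < 2 * n1"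
    using exists_pow2_between[of n1] n by auto
  define a where "a = n1 div n2"
  have a: "1 \<le> a" "n1 \<le> 2 * a * n2"
  proof -
    show "1 \<le> a"
      unfolding a_def using n by (simp add: Suc_le_eq div_greater_zero_iff)
    have "n1 = a * n2 + n1 mod n2" "n1 mod n2 < n2"
      using n by (simp_all add: a_def)
    then have "n1 \<le> (a + 1) * n2"
      by simp
    also have "\<dots> \<le> 2 * a * n2"
      using \<open>1 \<le> a\<close> by (intro mult_right_mono) auto
    finally show "n1 \<le> 2 * a * n2" .
  qed
  define E where "E M = multiscale_code K m (column_stretch n1 n2 M)" for M
  have close: "frob_dist n1 n2 M M' \<le> eps"
    if M: "M \<in> BISO n1 n2" and M': "M' \<in> BISO n1 n2" and eq: "E M = E M'" for M M'
  proof -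
    define F where "F = (\<Sum>i<n1. \<Sum>j<n2. (M i j - M' i j)\<^sup>2)"
    interpret equal_multiscale_codes K m "column_stretch n1 n2 M" "column_stretch n1 n2 M'"
      using column_stretch_biso_square[OF M n] column_stretch_biso_square[OF M' n] eq
      by unfold_locales (simp_all add: E_def)
    have "real a * F \<le> 32 * real (Suc (min K m)) * 4 ^ K / 2 ^ m"
      using sum_sq_column_stretch[OF K(1), of n2 M M'] sum_sq_error_le unfolding F_def a_def by linarith
    also have "\<dots> \<le> 32 * (real m + 1) * (8 * (real a * (real n1 * real n2))) / 2 ^ m"
    proof -
      have "2 ^ K \<le> 2 * n1" "2 ^ K \<le> 4 * a * n2"
        using K(2) a(2) by linarith+
      then have "real (2 ^ K) * real (2 ^ K) \<le> real (2 * n1) * real (4 * a * n2)"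
        by (intro mult_mono of_nat_mono) auto
      moreover have "(4::real) ^ K = real (2 ^ K) * real (2 ^ K)"
        by (simp flip: power_mult_distrib)
      ultimately show ?thesis
        by (intro divide_right_mono mult_mono) (simp_all add: algebra_simps)
    qed
    also have "\<dots> = real a * (256 * (real m + 1) * (real n1 * real n2) / 2 ^ m)"
      by simp
    finally have "F \<le> 256 * (real m + 1) * (real n1 * real n2) / 2 ^ m"
      by (rule mult_left_le_imp_le) (use a(1) in simp)
    also have "\<dots> \<le> eps\<^sup>2"
      using m by (simp add: divide_le_eq)
    finally show ?thesis
      unfolding frob_dist_def F_def[symmetric] using real_sqrt_le_mono eps by fastforce
  qed
  have "ln (real (covering_number eps (BISO n1 n2) (frob_dist n1 n2)))
      \<le> ln (real (card (code_space m (min K m))))"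
    using card_code_space[of m "min K m"] half_matrix_in_BISO[of n1 n2] close
      multiscale_code_in_code_space[OF column_stretch_biso_square[OF _ n]]
    by (intro ln_covering_number_le_code[where E = E]) (auto simp: E_def)
  also have "\<dots> \<le> ln (2 ^ (28 * 2 ^ m * (m + 1)))"
  proof -
    have "card (code_space m (min K m)) \<le> (2 ^ (28 * 2 ^ m)) ^ Suc (min K m)"
      using card_code_space by blast
    also have "\<dots> = 2 ^ (28 * 2 ^ m * Suc (min K m))"
      by (rule power_mult[symmetric])
    also have "\<dots> \<le> 2 ^ (28 * 2 ^ m * (m + 1))"
      by (intro power_increasing) auto
    finally have "real (card (code_space m (min K m))) \<le> 2 ^ (28 * 2 ^ m * (m + 1))"
      by (metis of_nat_le_iff of_nat_numeral of_nat_power)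
    moreover have "0 < card (code_space m (min K m))"
      using card_code_space[of m "min K m"]
        multiscale_code_in_code_space[OF column_stretch_biso_square[OF half_matrix_in_BISO n]]
      by (auto simp: card_gt_0_iff)
    ultimately show ?thesis by simp
  qed
  also have "\<dots> = 28 * 2 ^ m * (real m + 1) * ln 2"
    by (simp add: ln_realpow algebra_simps)
  finally show ?thesis .
qed

section \<open>Entrywise codes\<close>

definition num_levels :: "real \<Rightarrow> nat" where
  "num_levels e = nat \<lceil>1 / e\<rceil>"

text \<open>Values in \<open>[0, 1]\<close> are rounded down to the grid \<open>e * k\<close>, the top cell \<open>[e * (G - 1), 1]\<close>
  absorbing everything above it, so only \<open>G = num_levels e\<close> levels occur.\<close>
definition quantize :: "real \<Rightarrow> real \<Rightarrow> nat" where
  "quantize e x = min (nat \<lfloor>x / e\<rfloor>) (num_levels e - 1)"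

lemma num_levels_bounds:
  assumes "0 < e"
  shows "1 \<le> num_levels e" "1 \<le> real (num_levels e) * e" "real (num_levels e) < 1 / e + 1"
proof -
  have le: "1 / e \<le> real (num_levels e)" and lt: "real (num_levels e) < 1 / e + 1"
    using assms ceiling_correct[of "1 / e"] unfolding num_levels_def by auto
  show "real (num_levels e) < 1 / e + 1"
    by (rule lt)
  show "1 \<le> real (num_levels e) * e"
    using le assms by (simp add: divide_le_eq)
  have "0 < 1 / e"
    using assms by simp
  with le show "1 \<le> num_levels e"
    by linarith
qed

lemma quantize_less: "0 < e \<Longrightarrow> quantize e x < num_levels e"
  using num_levels_bounds(1)[of e] unfolding quantize_def by linarith

lemma quantize_mono: "0 < e \<Longrightarrow> x \<le> y \<Longrightarrow> quantize e x \<le> quantize e y"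
  unfolding quantize_def by (intro min.mono nat_mono floor_mono divide_right_mono) auto

lemma quantize_eq_imp_dist_le:
  assumes e: "0 < e" and x: "0 \<le> x" "x \<le> 1" and y: "0 \<le> y" "y \<le> 1"
    and eq: "quantize e x = quantize e y"
  shows "\<bar>x - y\<bar> \<le> e"
proof (cases "nat \<lfloor>x / e\<rfloor> < num_levels e - 1")
  case True
  then have "nat \<lfloor>y / e\<rfloor> = nat \<lfloor>x / e\<rfloor>"
    using eq unfolding quantize_def by (auto simp: min_def split: if_splits)
  moreover have "0 \<le> \<lfloor>x / e\<rfloor>" "0 \<le> \<lfloor>y / e\<rfloor>"
    using x y e by simp_all
  ultimately have "\<lfloor>x / e\<rfloor> = \<lfloor>y / e\<rfloor>"
    by (simp add: eq_nat_nat_iff)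
  then show ?thesis
    using floor_eq_imp_dist_less[OF e] by (simp add: less_imp_le)
next
  case False
  have top: "real (num_levels e - 1) * e \<le> z" if "\<not> nat \<lfloor>z / e\<rfloor> < num_levels e - 1" "0 \<le> z" for z
  proof -
    have nonneg: "0 \<le> \<lfloor>z / e\<rfloor>"
      using that(2) e by simp
    have "num_levels e - 1 \<le> nat \<lfloor>z / e\<rfloor>"
      using that(1) by simp
    then have "int (num_levels e - 1) \<le> \<lfloor>z / e\<rfloor>"
      using le_nat_iff[OF nonneg] by blast
    then have "real (num_levels e - 1) \<le> z / e"
      by (simp add: le_floor_iff)
    with e show ?thesis
      by (simp add: le_divide_eq)
  qed
  have "\<not> nat \<lfloor>y / e\<rfloor> < num_levels e - 1"
    using False eq unfolding quantize_def by (auto simp: min_def split: if_splits)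
  then have "real (num_levels e) * e - e \<le> y"
    using top[OF _ y(1)] num_levels_bounds(1)[OF e] by (simp add: of_nat_diff algebra_simps)
  moreover have "real (num_levels e) * e - e \<le> x"
    using top[OF False x(1)] num_levels_bounds(1)[OF e] by (simp add: of_nat_diff algebra_simps)
  ultimately show ?thesis
    using x(2) y(2) num_levels_bounds(2)[OF e] by linarith
qed

definition entry_code :: "nat \<Rightarrow> nat \<Rightarrow> real \<Rightarrow> (nat \<Rightarrow> nat \<Rightarrow> real) \<Rightarrow> nat \<times> nat \<Rightarrow> nat" where
  "entry_code n1 n2 e M = restrict (\<lambda>(i, j). quantize e (M i j)) ({..<n1} \<times> {..<n2})"

text \<open>Since the quantized entries of a column increase down the column, the column is determined
  by how many of them lie below each level \<open>k\<close>.\<close>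
definition profile_code :: "nat \<Rightarrow> nat \<Rightarrow> real \<Rightarrow> (nat \<Rightarrow> nat \<Rightarrow> real) \<Rightarrow> nat \<times> nat \<Rightarrow> nat" where
  "profile_code n1 n2 e M =
     restrict (\<lambda>(k, j). card {i. i < n1 \<and> quantize e (M i j) < k}) ({1..<num_levels e} \<times> {..<n2})"

lemma entry_code_in: "0 < e \<Longrightarrow> entry_code n1 n2 e M \<in> ({..<n1} \<times> {..<n2}) \<rightarrow>\<^sub>E {..<num_levels e}"
  unfolding entry_code_def by (simp only: restrict_PiE_iff) (auto simp: quantize_less)

lemma entry_code_eq_imp_dist_le:
  assumes "0 < e" "M \<in> BISO n1 n2" "M' \<in> BISO n1 n2"
    and "entry_code n1 n2 e M = entry_code n1 n2 e M'" "i < n1" "j < n2"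
  shows "\<bar>M i j - M' i j\<bar> \<le> e"
proof -
  have "quantize e (M i j) = quantize e (M' i j)"
    using fun_cong[OF assms(4), of "(i, j)"] assms(5,6) by (simp add: entry_code_def)
  then show ?thesis
    using quantize_eq_imp_dist_le[OF assms(1)] BISO_bounds[OF assms(2,5,6)] BISO_bounds[OF assms(3,5,6)]
    by blast
qed

lemma less_card_downward_closed_iff:
  assumes down: "\<And>i i'. i \<le> i' \<Longrightarrow> i' < n \<Longrightarrow> P i' \<Longrightarrow> P i" and i: "i < n"
  shows "P i \<longleftrightarrow> i < card {i. i < n \<and> P i}"
proof
  assume "P i"
  then have "{..i} \<subseteq> {i. i < n \<and> P i}"
    using down i by auto
  then show "i < card {i. i < n \<and> P i}"
    using card_mono[of "{i. i < n \<and> P i}" "{..i}"] by simp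
next
  assume less: "i < card {i. i < n \<and> P i}"
  show "P i"
  proof (rule ccontr)
    assume "\<not> P i"
    have "{i. i < n \<and> P i} \<subseteq> {..<i}"
    proof
      fix x assume "x \<in> {i. i < n \<and> P i}"
      then show "x \<in> {..<i}"
        using down[of i x] \<open>\<not> P i\<close> by (cases "x < i") auto
    qed
    then have "card {i. i < n \<and> P i} \<le> card {..<i}"
      by (intro card_mono) simp_all
    then show False
      using less by simp
  qed
qed

lemma profile_code_eq_imp_dist_le:
  assumes e: "0 < e" and M: "M \<in> BISO n1 n2" and M': "M' \<in> BISO n1 n2"
    and eq: "profile_code n1 n2 e M = profile_code n1 n2 e M'" and ij: "i < n1" "j < n2"
  shows "\<bar>M i j - M' i j\<bar> \<le> e"
proof -
  have below_iff: "quantize e (N i j) < k \<longleftrightarrow> i < card {i. i < n1 \<and> quantize e (N i j) < k}"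
    if N: "N \<in> BISO n1 n2" for N k
    using quantize_mono[OF e BISO_mono_row_index[OF N _ _ ij(2)]]
    by (intro less_card_downward_closed_iff[OF _ ij(1)]) (meson le_less_trans)
  have same: "quantize e (M i j) < k \<longleftrightarrow> quantize e (M' i j) < k" if "k \<in> {1..<num_levels e}" for k
    using fun_cong[OF eq, of "(k, j)"] that ij below_iff[OF M, of k] below_iff[OF M', of k]
    by (simp add: profile_code_def)
  have "quantize e (M i j) = quantize e (M' i j)"
    using same[of "quantize e (M i j)"] same[of "quantize e (M' i j)"]
      quantize_less[OF e, of "M i j"] quantize_less[OF e, of "M' i j"]
    by (cases "quantize e (M i j)" "quantize e (M' i j)" rule: linorder_cases) auto
  then show ?thesis
    using quantize_eq_imp_dist_le[OF e] BISO_bounds[OF M ij] BISO_bounds[OF M' ij] by blast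
qed

context
  fixes n1 n2 :: nat and e eps :: real and d :: "(nat \<Rightarrow> nat \<Rightarrow> real) \<Rightarrow> (nat \<Rightarrow> nat \<Rightarrow> real) \<Rightarrow> real"
  assumes e: "0 < e"
    and entrywise: "\<And>A B. (\<And>i j. i < n1 \<Longrightarrow> j < n2 \<Longrightarrow> \<bar>A i j - B i j\<bar> \<le> e) \<Longrightarrow> d A B \<le> eps"
begin

lemma ex_covers_BISO: "\<exists>T. covers eps (BISO n1 n2) d T"
proof (rule exI, rule covers_of_code(1)[where E = "entry_code n1 n2 e"
    and S = "({..<n1} \<times> {..<n2}) \<rightarrow>\<^sub>E {..<num_levels e}"])
  fix A B assume "A \<in> BISO n1 n2" "B \<in> BISO n1 n2" "entry_code n1 n2 e A = entry_code n1 n2 e B"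
  then show "d A B \<le> eps"
    using entry_code_eq_imp_dist_le[OF e] by (intro entrywise)
next
  show "entry_code n1 n2 e ` BISO n1 n2 \<subseteq> ({..<n1} \<times> {..<n2}) \<rightarrow>\<^sub>E {..<num_levels e}"
    using entry_code_in[OF e] by blast
qed (auto intro: finite_PiE)

lemma ln_covering_number_BISO_le_entry_code:
  "ln (real (covering_number eps (BISO n1 n2) d)) \<le> real n1 * real n2 * ln (real (num_levels e))"
proof -
  have "ln (real (covering_number eps (BISO n1 n2) d))
      \<le> ln (real (card (({..<n1} \<times> {..<n2}) \<rightarrow>\<^sub>E {..<num_levels e})))"
  proof (rule ln_covering_number_le_code[where E = "entry_code n1 n2 e"
      and S = "({..<n1} \<times> {..<n2}) \<rightarrow>\<^sub>E {..<num_levels e}"])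
    fix A B assume "A \<in> BISO n1 n2" "B \<in> BISO n1 n2" "entry_code n1 n2 e A = entry_code n1 n2 e B"
    then show "d A B \<le> eps"
      using entry_code_eq_imp_dist_le[OF e] by (intro entrywise)
  next
    show "entry_code n1 n2 e ` BISO n1 n2 \<subseteq> ({..<n1} \<times> {..<n2}) \<rightarrow>\<^sub>E {..<num_levels e}"
      using entry_code_in[OF e] by blast
  qed (use half_matrix_in_BISO[of n1 n2] in \<open>auto intro: finite_PiE\<close>)
  also have "\<dots> = real n1 * real n2 * ln (real (num_levels e))"
    using num_levels_bounds(1)[OF e] by (simp add: card_PiE card_cartesian_product ln_realpow)
  finally show ?thesis .
qed

lemma ln_covering_number_BISO_le_profile_code:
  "ln (real (covering_number eps (BISO n1 n2) d))
    \<le> real (num_levels e - 1) * real n2 * ln (real n1 + 1)"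
proof -
  have "card {i. i < n1 \<and> P i} \<le> n1" for P
    using card_mono[of "{..<n1}" "{i. i < n1 \<and> P i}"] by auto
  then have code: "profile_code n1 n2 e M \<in> ({1..<num_levels e} \<times> {..<n2}) \<rightarrow>\<^sub>E {0..n1}" for M
    by (auto simp: profile_code_def)
  have "ln (real (covering_number eps (BISO n1 n2) d))
      \<le> ln (real (card (({1..<num_levels e} \<times> {..<n2}) \<rightarrow>\<^sub>E {0..n1})))"
  proof (rule ln_covering_number_le_code[where E = "profile_code n1 n2 e"
      and S = "({1..<num_levels e} \<times> {..<n2}) \<rightarrow>\<^sub>E {0..n1}"])
    fix A B assume "A \<in> BISO n1 n2" "B \<in> BISO n1 n2" "profile_code n1 n2 e A = profile_code n1 n2 e B"
    then show "d A B \<le> eps"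
      using profile_code_eq_imp_dist_le[OF e] by (intro entrywise)
  qed (use half_matrix_in_BISO[of n1 n2] code in \<open>auto intro: finite_PiE\<close>)
  also have "\<dots> = real (num_levels e - 1) * real n2 * ln (real n1 + 1)"
    by (simp add: card_PiE card_cartesian_product ln_realpow add.commute)
  finally show ?thesis .
qed

end

section \<open>Entropy bounds\<close>

lemma exists_dyadic_precision:
  fixes x :: real
  assumes x: "4 \<le> x"
  obtains m :: nat where "256 * (real m + 1) * x \<le> 2 ^ m"
    and "28 * 2 ^ m * (real m + 1) * ln 2 \<le> 10^9 * x * (ln x / 2)\<^sup>2"
proof -
  define L where "L = ln x / 2"
  have ln2: "2/3 \<le> ln (2::real)" "ln (2::real) \<le> 1"
    using ln2_ge_two_thirds ln_2_less_1 by auto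
  have "ln (4::real) = 2 * ln 2"
    using ln_realpow[of 2 2] by simp
  moreover have "ln 4 \<le> ln x"
    using x by simp
  ultimately have "2 * ln 2 \<le> ln x"
    by simp
  then have L: "2/3 \<le> L" "log 2 x \<le> 3 * L"
    using ln2 x unfolding L_def log_def by (auto simp: field_simps)
  define k where "k = nat \<lceil>log 2 x\<rceil>"
  have k: "x \<le> 2 ^ k" "real k \<le> log 2 x + 1"
  proof -
    have "0 \<le> log 2 x"
      using x by simp
    then have "log 2 x \<le> real k" "real k \<le> log 2 x + 1"
      unfolding k_def by linarith+
    then show "real k \<le> log 2 x + 1" "x \<le> 2 ^ k"
      using x powr_mono[of "log 2 x" "real k" 2] by (simp_all add: powr_realpow)
  qed
  define P where "P m \<longleftrightarrow> 256 * (real m + 1) * x \<le> 2 ^ m" for m :: nat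
  have "P (2 * k + 30)"
  proof -
    have "real k \<le> 2 ^ k" "1 \<le> (2::real) ^ k"
      using of_nat_less_two_power[of k] by simp_all
    then have "2 * real k + 31 \<le> 33 * 2 ^ k"
      by linarith
    then have "256 * (real (2 * k + 30) + 1) * x \<le> 256 * (33 * 2 ^ k) * 2 ^ k"
      using k(1) x by (intro mult_mono) auto
    also have "\<dots> \<le> 2 ^ 30 * (2 ^ k * 2 ^ k)"
      by simp
    also have "\<dots> = 2 ^ (2 * k + 30)"
      by (simp only: mult_2 power_add) (simp only: mult_ac)
    finally show ?thesis unfolding P_def .
  qed
  define m where "m = (LEAST m. P m)"
  have Pm: "P m" and m_le: "m \<le> 2 * k + 30"
    unfolding m_def by (rule LeastI, fact, rule Least_le, fact)
  have pow_m: "2 ^ m \<le> 512 * (real m + 1) * x"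
  proof (cases m)
    case (Suc j)
    then have "\<not> P j"
      using not_less_Least[of j P] m_def by auto
    then have "2 ^ j < 256 * (real j + 1) * x"
      unfolding P_def by simp
    then have "2 ^ m < 512 * (real j + 1) * x"
      using Suc by (simp add: ring_distribs)
    also have "\<dots> \<le> 512 * (real m + 1) * x"
      using Suc x by (intro mult_right_mono) auto
    finally show ?thesis by simp
  qed (use x in simp)
  have m_L: "real m + 1 \<le> 56 * L"
    using m_le k(2) L by linarith
  have "28 * 2 ^ m * (real m + 1) * ln 2 \<le> 28 * 2 ^ m * (real m + 1)"
    using ln2 by (intro mult_left_le) auto
  also have "\<dots> \<le> 28 * (512 * (real m + 1) * x) * (real m + 1)"
    using pow_m by (intro mult_right_mono) auto
  also have "\<dots> = 14336 * x * (real m + 1)\<^sup>2"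
    by (simp add: power2_eq_square)
  also have "\<dots> \<le> 14336 * x * (56 * L)\<^sup>2"
    using m_L x by (intro mult_left_mono power_mono) auto
  also have "\<dots> \<le> 10^9 * x * L\<^sup>2"
    using x by (simp add: power_mult_distrib)
  finally show ?thesis
    using that Pm unfolding P_def L_def by blast
qed

context
  fixes n1 n2 :: nat and eps :: real
  assumes n: "1 \<le> n2" "n2 \<le> n1" and eps: "0 < eps"
begin

lemma frob_dist_le_if_entrywise:
  assumes "\<And>i j. i < n1 \<Longrightarrow> j < n2 \<Longrightarrow> \<bar>A i j - B i j\<bar> \<le> eps / sqrt (real n1 * real n2)"
  shows "frob_dist n1 n2 A B \<le> eps"
  using frob_dist_le_entrywise[of n1 n2 A B, OF assms] n by simp

lemma sup_dist_le_if_entrywise: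
  assumes "\<And>i j. i < n1 \<Longrightarrow> j < n2 \<Longrightarrow> \<bar>A i j - B i j\<bar> \<le> eps"
  shows "sup_dist n1 n2 A B \<le> eps"
  using assms n by (intro sup_dist_le_entrywise) auto

lemma ln_covering_number_BISO_frob_quadratic:
  assumes small: "eps \<le> sqrt (real n1 * real n2) / 2"
  defines "L \<equiv> ln (sqrt (real n1 * real n2) / eps)"
  shows "ln (real (covering_number eps (BISO n1 n2) (frob_dist n1 n2)))
    \<le> 10^9 * (real n1 * real n2) / eps\<^sup>2 * L\<^sup>2"
proof -
  define x where "x = real n1 * real n2 / eps\<^sup>2"
  have N: "0 < real n1 * real n2"
    using n by simp
  have x_sq: "x = (sqrt (real n1 * real n2) / eps)\<^sup>2"
    unfolding x_def using N by (simp add: power_divide)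
  have "2 \<le> sqrt (real n1 * real n2) / eps"
    using small eps by (simp add: field_simps)
  then have "4 \<le> x"
    unfolding x_sq using power_mono[of 2 _ 2] by fastforce
  then obtain m :: nat where m: "256 * (real m + 1) * x \<le> 2 ^ m"
    "28 * 2 ^ m * (real m + 1) * ln 2 \<le> 10^9 * x * (ln x / 2)\<^sup>2"
    by (rule exists_dyadic_precision)
  have "256 * (real m + 1) * (real n1 * real n2) \<le> eps\<^sup>2 * 2 ^ m"
    using m(1) eps unfolding x_def by (simp add: field_simps)
  then have "ln (real (covering_number eps (BISO n1 n2) (frob_dist n1 n2)))
      \<le> 28 * 2 ^ m * (real m + 1) * ln 2"
    by (rule ln_covering_number_BISO_frob_le_multiscale[OF n eps])
  moreover have "ln x / 2 = L"
    unfolding x_sq L_def using N eps by (simp add: ln_realpow)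
  ultimately show ?thesis
    using m(2) unfolding x_def by simp
qed

lemma ln_covering_number_BISO_frob_linear:
  assumes small: "eps \<le> sqrt (real n1 * real n2) / 2"
  defines "L \<equiv> ln (sqrt (real n1 * real n2) / eps)"
  shows "ln (real (covering_number eps (BISO n1 n2) (frob_dist n1 n2))) \<le> 2 * (real n1 * real n2) * L"
proof -
  define e where "e = eps / sqrt (real n1 * real n2)"
  have e: "0 < e" "1 / e = sqrt (real n1 * real n2) / eps" "2 \<le> 1 / e"
    unfolding e_def using n eps small by (auto simp: field_simps)
  have "real (num_levels e) \<le> 2 / e"
    using num_levels_bounds(3)[OF e(1)] e(3) by (simp add: field_simps)
  then have "ln (real (num_levels e)) \<le> ln (2 / e)"
    using num_levels_bounds(1)[OF e(1)] e(1) by (subst ln_le_cancel_iff) auto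
  also have "ln (2 / e) = ln 2 + L"
    unfolding L_def e(2)[symmetric] using e(1) by (simp add: ln_div)
  also have "\<dots> \<le> 2 * L"
    using e(2,3) unfolding L_def by simp
  finally have "real n1 * real n2 * ln (real (num_levels e)) \<le> real n1 * real n2 * (2 * L)"
    by (intro mult_left_mono) auto
  moreover have "ln (real (covering_number eps (BISO n1 n2) (frob_dist n1 n2)))
      \<le> real n1 * real n2 * ln (real (num_levels e))"
    using e(1) frob_dist_le_if_entrywise unfolding e_def
    by (rule ln_covering_number_BISO_le_entry_code)
  ultimately show ?thesis
    by simp
qed

lemma ln_covering_number_BISO_frob_rows:
  assumes "2 \<le> n1"
  shows "ln (real (covering_number eps (BISO n1 n2) (frob_dist n1 n2)))
    \<le> 2 * sqrt (real n1 * real n2) / eps * real n2 * ln (real n1)"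
proof -
  define e where "e = eps / sqrt (real n1 * real n2)"
  have e: "0 < e" "1 / e = sqrt (real n1 * real n2) / eps"
    unfolding e_def using n eps by auto
  have "real (num_levels e - 1) \<le> sqrt (real n1 * real n2) / eps"
    using num_levels_bounds[OF e(1)] e(2) by (simp add: of_nat_diff)
  moreover have "ln (real n1 + 1) \<le> 2 * ln (real n1)"
  proof -
    have "2 * real n1 \<le> real n1 * real n1"
      using assms by (intro mult_right_mono) auto
    then have "real n1 + 1 \<le> real n1 * real n1"
      using assms by linarith
    then have "ln (real n1 + 1) \<le> ln (real n1 * real n1)"
      using assms by (subst ln_le_cancel_iff) auto
    also have "\<dots> = 2 * ln (real n1)"
      using assms by (simp add: ln_mult)
    finally show ?thesis .
  qed
  ultimately have "real (num_levels e - 1) * real n2 * ln (real n1 + 1)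
      \<le> sqrt (real n1 * real n2) / eps * real n2 * (2 * ln (real n1))"
    using eps assms by (intro mult_mono) auto
  moreover have "ln (real (covering_number eps (BISO n1 n2) (frob_dist n1 n2)))
      \<le> real (num_levels e - 1) * real n2 * ln (real n1 + 1)"
    using e(1) frob_dist_le_if_entrywise unfolding e_def
    by (rule ln_covering_number_BISO_le_profile_code)
  ultimately show ?thesis
    by (simp add: mult_ac)
qed

lemma ln_covering_number_Perm_rc_frob_le:
  "ln (real (covering_number eps (Perm_rc n1 n2) (frob_dist n1 n2)))
    \<le> 2 * real n1 * ln (real n1) + ln (real (covering_number eps (BISO n1 n2) (frob_dist n1 n2)))"
proof -
  have "0 < eps / sqrt (real n1 * real n2)"
    using n eps by simp
  then obtain T where "covers eps (BISO n1 n2) (frob_dist n1 n2) T"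
    using ex_covers_BISO[of "eps / sqrt (real n1 * real n2)" n1 n2 "frob_dist n1 n2" eps,
        OF _ frob_dist_le_if_entrywise] by blast
  then show ?thesis
    using n(2) frob_dist_perm_mat by (rule ln_covering_number_Perm_rc_le)
qed

lemma ln_covering_number_Perm_rc_sup_le:
  "ln (real (covering_number eps (Perm_rc n1 n2) (sup_dist n1 n2)))
    \<le> 2 * real n1 * ln (real n1) + ln (real (covering_number eps (BISO n1 n2) (sup_dist n1 n2)))"
proof -
  obtain T where "covers eps (BISO n1 n2) (sup_dist n1 n2) T"
    using ex_covers_BISO[of eps n1 n2 "sup_dist n1 n2" eps, OF eps sup_dist_le_if_entrywise] by blast
  then show ?thesis
    using n(2) sup_dist_perm_mat by (rule ln_covering_number_Perm_rc_le)
qed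

lemma ln_covering_number_BISO_sup_le:
  assumes "eps \<le> 1"
  shows "ln (real (covering_number eps (BISO n1 n2) (sup_dist n1 n2)))
    \<le> min (real n2 / eps * ln (exp 1 * real n1)) (real n1 * real n2 * ln (exp 1 / eps))"
proof -
  have G: "1 \<le> num_levels eps" "real (num_levels eps) < 1 / eps + 1"
    using num_levels_bounds[OF eps] by auto
  have e2: "2 \<le> exp (1::real)"
    using exp_ge_add_one_self[of 1] by simp
  have "real (num_levels eps - 1) * real n2 * ln (real n1 + 1)
      \<le> 1 / eps * real n2 * ln (exp 1 * real n1)"
  proof -
    have "2 * real n1 \<le> exp 1 * real n1"
      using e2 by (intro mult_right_mono) auto
    then have "real n1 + 1 \<le> exp 1 * real n1"
      using n by linarith
    then have "ln (real n1 + 1) \<le> ln (exp 1 * real n1)"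
      using n by (simp flip: ln_le_cancel_iff)
    moreover have "real (num_levels eps - 1) \<le> 1 / eps"
      using G by (simp add: of_nat_diff)
    ultimately show ?thesis
      using eps n by (intro mult_mono) auto
  qed
  moreover have "real n1 * real n2 * ln (real (num_levels eps))
      \<le> real n1 * real n2 * ln (exp 1 / eps)"
  proof -
    have "(1 + eps) / eps \<le> exp 1 / eps"
      using eps assms e2 by (intro divide_right_mono) auto
    then have "1 / eps + 1 \<le> exp 1 / eps"
      using eps by (simp add: add_divide_distrib)
    then have "real (num_levels eps) \<le> exp 1 / eps"
      using G by linarith
    then have "ln (real (num_levels eps)) \<le> ln (exp 1 / eps)"
      using G eps by (subst ln_le_cancel_iff) auto
    then show ?thesis
      by (intro mult_left_mono) auto
  qed
  moreover have "ln (real (covering_number eps (BISO n1 n2) (sup_dist n1 n2)))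
      \<le> real (num_levels eps - 1) * real n2 * ln (real n1 + 1)"
    by (rule ln_covering_number_BISO_le_profile_code[OF eps]) (rule sup_dist_le_if_entrywise)
  moreover have "ln (real (covering_number eps (BISO n1 n2) (sup_dist n1 n2)))
      \<le> real n1 * real n2 * ln (real (num_levels eps))"
    by (rule ln_covering_number_BISO_le_entry_code[OF eps]) (rule sup_dist_le_if_entrywise)
  ultimately show ?thesis
    by simp
qed

end

lemma ln_covering_number_BISO_frob_le_min:
  fixes n1 n2 :: nat and eps :: real
  assumes n: "1 \<le> n2" "n2 \<le> n1" "2 \<le> n1" and eps: "0 < eps" "eps \<le> sqrt (real n1 * real n2)"
  defines "L \<equiv> ln (sqrt (real n1 * real n2) / eps)"
  shows "ln (real (covering_number eps (BISO n1 n2) (frob_dist n1 n2)))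
    \<le> min (min (10^9 * (real n1 * real n2) / eps\<^sup>2 * L\<^sup>2) (10^9 * (real n1 * real n2) * L))
        (10^9 * sqrt (real n1 * real n2) / eps * real n2 * ln (real n1))"
proof (cases "sqrt (real n1 * real n2) / 2 \<le> eps")
  case True
  have "0 \<le> L"
    unfolding L_def using eps by simp
  moreover have "0 \<le> ln (real n1)"
    using n by simp
  ultimately show ?thesis
    using ln_covering_number_eq_0_large_eps(1)[OF half_matrix_in_BISO BISO_subset_Perm_rc _ n(1) True]
      n eps
    by simp
next
  case False
  then have small: "eps \<le> sqrt (real n1 * real n2) / 2"
    by simp
  have "0 \<le> L" "0 \<le> real n1 * real n2"
    unfolding L_def using eps n by simp_all
  have "ln (real (covering_number eps (BISO n1 n2) (frob_dist n1 n2)))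
      \<le> 10^9 * (real n1 * real n2) / eps\<^sup>2 * L\<^sup>2"
    unfolding L_def by (rule ln_covering_number_BISO_frob_quadratic[OF n(1,2) eps(1) small])
  moreover have "ln (real (covering_number eps (BISO n1 n2) (frob_dist n1 n2)))
      \<le> 10^9 * (real n1 * real n2) * L"
  proof -
    have "2 * (real n1 * real n2) * L \<le> 10^9 * (real n1 * real n2) * L"
      using \<open>0 \<le> L\<close> \<open>0 \<le> real n1 * real n2\<close> by (intro mult_right_mono) auto
    then show ?thesis
      using ln_covering_number_BISO_frob_linear[OF n(1,2) eps(1) small] unfolding L_def by linarith
  qed
  moreover have "ln (real (covering_number eps (BISO n1 n2) (frob_dist n1 n2)))
      \<le> 10^9 * sqrt (real n1 * real n2) / eps * real n2 * ln (real n1)"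
  proof -
    define R where "R = sqrt (real n1 * real n2) / eps * real n2 * ln (real n1)"
    have "0 \<le> R"
      unfolding R_def using eps n by simp
    then have "2 * R \<le> 10^9 * R"
      by simp
    moreover have "2 * sqrt (real n1 * real n2) / eps * real n2 * ln (real n1) = 2 * R"
      "10^9 * sqrt (real n1 * real n2) / eps * real n2 * ln (real n1) = 10^9 * R"
      unfolding R_def by simp_all
    ultimately show ?thesis
      using ln_covering_number_BISO_frob_rows[OF n(1,2) eps(1) n(3)] by linarith
  qed
  ultimately show ?thesis
    by (intro min.boundedI)
qed

theorem lemma5:
  "\<exists>c>0. \<forall>(n1::nat) (n2::nat) (eps::real). 1 \<le> n2 \<and> n2 \<le> n1 \<and> 0 < eps \<longrightarrow>
     ((2 \<le> n1 \<and> eps \<le> sqrt (real n1 * real n2) \<longrightarrow>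
        (let L = ln (sqrt (real n1 * real n2) / eps);
             B = min (min (c * (real n1 * real n2) / eps\<^sup>2 * L\<^sup>2)
                          (c * (real n1 * real n2) * L))
                     (c * sqrt (real n1 * real n2) / eps * real n2 * ln (real n1))
         in ln (real (covering_number eps (Perm_rc n1 n2) (frob_dist n1 n2)))
              \<le> 2 * real n1 * ln (real n1) + B
          \<and> ln (real (covering_number eps (BISO n1 n2) (frob_dist n1 n2))) \<le> B))
    \<and> (sqrt (real n1 * real n2) < eps \<longrightarrow>
        ln (real (covering_number eps (Perm_rc n1 n2) (frob_dist n1 n2))) = 0
      \<and> ln (real (covering_number eps (BISO n1 n2) (frob_dist n1 n2))) = 0)
    \<and> (eps \<le> 1 \<longrightarrow>
        (let B = min (real n2 / eps * ln (exp 1 * real n1))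
                     (real n1 * real n2 * ln (exp 1 / eps))
         in ln (real (covering_number eps (Perm_rc n1 n2) (sup_dist n1 n2)))
              \<le> B + 2 * real n1 * ln (real n1)
          \<and> ln (real (covering_number eps (BISO n1 n2) (sup_dist n1 n2))) \<le> B))
    \<and> (1 < eps \<longrightarrow>
        ln (real (covering_number eps (Perm_rc n1 n2) (sup_dist n1 n2))) = 0
      \<and> ln (real (covering_number eps (BISO n1 n2) (sup_dist n1 n2))) = 0))"
  unfolding Let_def
  apply (intro exI[of _ "10^9::real"] conjI allI impI; (elim conjE)?)
  subgoal by simp
  subgoal for n1 n2 eps
    using ln_covering_number_BISO_frob_le_min[of n2 n1 eps]
      ln_covering_number_Perm_rc_frob_le[of n2 n1 eps]
    by linarith
  subgoal for n1 n2 eps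
    using ln_covering_number_BISO_frob_le_min[of n2 n1 eps] by blast
  subgoal for n1 n2 eps
    by (rule ln_covering_number_eq_0_large_eps(1)[OF half_matrix_in_Perm_rc order_refl]) simp_all
  subgoal for n1 n2 eps
    by (rule ln_covering_number_eq_0_large_eps(1)[OF half_matrix_in_BISO BISO_subset_Perm_rc]) simp_all
  subgoal for n1 n2 eps
    using ln_covering_number_BISO_sup_le[of n2 n1 eps]
      ln_covering_number_Perm_rc_sup_le[of n2 n1 eps]
    by linarith
  subgoal for n1 n2 eps
    using ln_covering_number_BISO_sup_le[of n2 n1 eps] by blast
  subgoal for n1 n2 eps
    by (rule ln_covering_number_eq_0_large_eps(2)[OF half_matrix_in_Perm_rc order_refl]) simp_all
  subgoal for n1 n2 eps
    by (rule ln_covering_number_eq_0_large_eps(2)[OF half_matrix_in_BISO BISO_subset_Perm_rc]) simp_all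
  done

end
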